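(* Assume (G0)–(G4). Let $h_0(X):=|X-nc|_\Sigma^2$ and, for $\theta>0$, $h_\theta(X):=\exp\{n^{-1}\theta h_0(X)\}$. Then for every $\delta\le\min\{\delta_*,\delta'_*(d)\}$ and every $X\in\widetilde B_{n,\delta}(c)$ with $|X-nc|_\Sigma\ge K_*\sqrt{nd}$, $$\mathcal A_n^\delta h_0(X)\le-\alpha_1h_0(X),$$ and, if in addition $n\ge n_*$, $$\mathcal A_n^\delta h_\theta(X)\le-\tfrac12n^{-1}\alpha_1\theta h_0(X)h_\theta(X)\quad\text{for all }0<\theta\le\theta_1.$$
   Context: Fix integers $d\ge1$, $n\ge d^4$ (standing assumption). Let $\mathcal J\subset\mathbb Z^d$ be finite, $g^J:\mathbb R^d\to[0,\infty)$ for $J\in\mathcal J$, $F(\xi):=\sum_JJg^J(\xi)$, $\sigma^2(x):=\sum_JJJ^Tg^J(x)$. Fix $c\in\mathbb R^d$, $\delta_0>0$, $B_{\delta_0}(c):=\{x:|x-c|\le\delta_0\}$. Assumptions: (G0) $F(c)=0$; (G1) all eigenvalues of $A:=DF(c)$ have negative real part; (G2) each $g^J$ is $C^2$ on $B_{\delta_0}(c)$; (G3) there is $\varepsilon_0>0$ with $\inf_{B_{\delta_0}(c)}g^J\ge\varepsilon_0g^J(c)>0$ for all $J$; (G4) each $e^{(j)}$ is a finite sum of elements of $\mathcal J$. Let $\sigma^2:=\sigma^2(c)$, $\Sigma$ the positive definite symmetric solution of $A\Sigma+\Sigma A^T+\sigma^2=0$, $|Y|_\Sigma:=(Y^T\Sigma^{-1}Y)^{1/2}$,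 $\widetilde B_{n,\delta}(c):=\{X\in\mathbb Z^d:|X-nc|_\Sigma\le n\delta\}$. The restricted process $X_n^\delta$ jumps $X\to X+J$ at rate $ng^J_\delta(n^{-1}X)$, where $g^J_\delta(n^{-1}X)=g^J(n^{-1}X)$ if $X,X+J\in\widetilde B_{n,\delta}(c)$ and $0$ otherwise; its generator is $\mathcal A_n^\delta h(X):=n\sum_Jg^J_\delta(n^{-1}X)\{h(X+J)-h(X)\}$. Notation: for symmetric positive definite $M$, $\lambda_{\min}(M),\lambda_{\max}(M)$ are its extreme eigenvalues and $\rho(M):=\lambda_{\max}(M)/\lambda_{\min}(M)$. $L_0:=\max_J\sup_{B_{\delta_0}(c)}g^J/g^J(c)$, $L_2:=\max_J\sup_{B_{\delta_0}(c)}\|D^2g^J\|/g^J(c)$; $\Lambda:=\mathrm{Tr}(\sigma^2)$, $\bar\Lambda:=\Lambda/d$; $J^\Sigma_{\max}:=\max_J|\Sigma^{-1/2}J|$; $\sigma^2_\Sigma:=\Sigma^{-1/2}\sigma^2\Sigma^{-1/2}$; $\alpha_1:=\tfrac12\lambda_{\min}(\sigma^2_\Sigma)$. Constants: $K_*:=(2L_0\mathrm{Tr}(\sigma^2_\Sigma)/(d\alpha_1))^{1/2}$; $\delta_*:=\delta_0/\sqrt{\lambda_{\max}(\Sigma)}$; $\delta'_*(d):=\alpha_1\sqrt{\lambda_{\min}(\Sigma)}/(4d\bar\Lambda L_2\lambda_{\max}(\Sigma))$ (interpreted as $+\infty$ if $L_2=0$); $\theta_1:=d^{-1}\min\{1/(3d^{-1}J^\Sigma_{\max}\delta_*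 ),\,1/(64L_0\rho(\sigma^2)\rho(\Sigma)),\,1/(4(d^{-1}J^\Sigma_{\max})^2)\}$; $n_*:=(d^{-1}J^\Sigma_{\max}/\delta_* )^{4/3}$. *)

theory Defs
  imports "HOL-Analysis.Analysis"
begin

definition lattice_pt :: "real^'d \<Rightarrow> bool" where
  "lattice_pt X \<longleftrightarrow> (\<forall>i. X $ i \<in> \<int>)"

definition sym_mat :: "real^'d^'d \<Rightarrow> bool" where
  "sym_mat M \<longleftrightarrow> transpose M = M"

definition posdef :: "real^'d^'d \<Rightarrow> bool" where
  "posdef M \<longleftrightarrow> sym_mat M \<and> (\<forall>v. v \<noteq> 0 \<longrightarrow> v \<bullet> (M *v v) > 0)"

definition real_eigenvalues :: "real^'d^'d \<Rightarrow> real set" where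
  "real_eigenvalues M = {l. \<exists>v. v \<noteq> 0 \<and> M *v v = l *\<^sub>R v}"

definition lam_min :: "real^'d^'d \<Rightarrow> real" where
  "lam_min M = Min (real_eigenvalues M)"

definition lam_max :: "real^'d^'d \<Rightarrow> real" where
  "lam_max M = Max (real_eigenvalues M)"

definition cond_num :: "real^'d^'d \<Rightarrow> real" where
  "cond_num M = lam_max M / lam_min M"

definition hurwitz :: "real^'d^'d \<Rightarrow> bool" where
  "hurwitz A \<longleftrightarrow> (\<forall>(l::complex) (v::complex^'d). v \<noteq> 0 \<and>
      (\<chi> i j. complex_of_real (A $ i $ j)) *v v = l *s v \<longrightarrow> Re l < 0)"

definition psd_sqrt :: "real^'d^'d \<Rightarrow> real^'d^'d" where
  "psd_sqrt M = (THE R. posdef R \<and> R ** R = M)"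

definition snorm :: "real^'d^'d \<Rightarrow> real^'d \<Rightarrow> real" where
  "snorm S Y = sqrt (Y \<bullet> (matrix_inv S *v Y))"

definition tball :: "real^'d^'d \<Rightarrow> nat \<Rightarrow> real \<Rightarrow> real^'d \<Rightarrow> (real^'d) set" where
  "tball S n \<delta> c = {X. lattice_pt X \<and> snorm S (X - real n *\<^sub>R c) \<le> real n * \<delta>}"

definition g_restr :: "(real^'d \<Rightarrow> real^'d \<Rightarrow> real) \<Rightarrow> real^'d^'d \<Rightarrow> nat \<Rightarrow> real
     \<Rightarrow> real^'d \<Rightarrow> real^'d \<Rightarrow> real^'d \<Rightarrow> real" where
  "g_restr g S n \<delta> c J X =
     (if X \<in> tball S n \<delta> c \<and> X + J \<in> tball S n \<delta> c then g J (inverse (real n) *\<^sub>R X) else 0)"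

definition gen :: "(real^'d) set \<Rightarrow> (real^'d \<Rightarrow> real^'d \<Rightarrow> real) \<Rightarrow> real^'d^'d \<Rightarrow> nat \<Rightarrow> real
     \<Rightarrow> real^'d \<Rightarrow> (real^'d \<Rightarrow> real) \<Rightarrow> real^'d \<Rightarrow> real" where
  "gen JJ g S n \<delta> c h X =
     real n * (\<Sum>J\<in>JJ. g_restr g S n \<delta> c J X * (h (X + J) - h X))"

definition sigma2 :: "(real^'d) set \<Rightarrow> (real^'d \<Rightarrow> real^'d \<Rightarrow> real) \<Rightarrow> real^'d \<Rightarrow> real^'d^'d" where
  "sigma2 JJ g x = (\<chi> i k. \<Sum>J\<in>JJ. J $ i * J $ k * g J x)"

definition drift :: "(real^'d) set \<Rightarrow> (real^'d \<Rightarrow> real^'d \<Rightarrow> real) \<Rightarrow> real^'d \<Rightarrow> real^'d" where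
  "drift JJ g x = (\<Sum>J\<in>JJ. g J x *\<^sub>R J)"

end

theory Submission
  imports Defs
begin

text \<open>
  Write \<open>Z = \<Sigma>^(-1/2) (X - n c)\<close>, so that \<open>h\<^sub>0 X = |Z|\<^sup>2\<close> and a jump by \<open>J\<close> raises \<open>h\<^sub>0\<close> by
  \<open>2 \<langle>\<Sigma>\<^sup>-\<^sup>1 (X - n c), J\<rangle> + |\<Sigma>^(-1/2) J|\<^sup>2\<close>. Jumps suppressed by the restriction would leave
  the ball, where \<open>h\<^sub>0\<close> is larger, so the restricted generator is bounded by the unrestricted one
  with rates taken at \<open>x = X / n\<close>. Expanding the rates to second order about the equilibrium
  \<open>c\<close>, the linear term is \<open>2 \<langle>\<Sigma>\<^sup>-\<^sup>1 (X - n c), A (X - n c)\<rangle>\<close>, which the Lyapunov equation turns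
  into \<open>-\<langle>Z, \<sigma>\<^sup>2\<^sub>\<Sigma> Z\<rangle> \<le> -2 \<alpha>\<^sub>1 |Z|\<^sup>2\<close>; the Taylor remainder costs at most \<open>\<alpha>\<^sub>1 |Z|\<^sup>2 / 4\<close>
  because \<open>\<delta> \<le> \<delta>'\<^sub>*\<close>, and the jump-size term at most \<open>\<alpha>\<^sub>1 |Z|\<^sup>2 / 2\<close> because \<open>|Z| \<ge> K\<^sub>* \<surd>(n d)\<close>.
  For \<open>h\<^sub>\<theta>\<close>, the bound \<open>e\<^sup>u - 1 \<le> u + 3 u\<^sup>2 / 2\<close> for \<open>|u| \<le> 1\<close> reduces the claim to the same
  first-order estimate plus a bound on the second moment of the increments, which
  \<open>\<theta> \<le> \<theta>\<^sub>1\<close> keeps below \<open>\<alpha>\<^sub>1 |Z|\<^sup>2 / 2\<close>.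
\<close>

section \<open>Spectral theory of symmetric matrices\<close>

lemma sym_mat_inner_commute:
  fixes M :: "real^'n^'n"
  assumes "sym_mat M"
  shows "(M *v x) \<bullet> y = x \<bullet> (M *v y)"
proof -
  have "M *v x = x v* M" using assms by (metis sym_mat_def vector_transpose_matrix)
  then show ?thesis by (simp add: dot_lmul_matrix)
qed

lemma linear_dominated_by_quadratic_eq_0:
  fixes a b :: real
  assumes "\<And>t. 2 * t * a \<le> t\<^sup>2 * b" and "a \<ge> 0"
  shows "a = 0"
proof (rule ccontr)
  assume "a \<noteq> 0"
  with assms(2) have a: "a > 0" by simp
  define t where "t = a / (\<bar>b\<bar> + 1)"
  have t: "t > 0" using a by (simp add: t_def)
  have "2 * t * a \<le> t\<^sup>2 * \<bar>b\<bar>"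
    using assms(1)[of t] by (smt (verit) abs_ge_self mult_left_mono zero_le_power2)
  then have "2 * a \<le> t * \<bar>b\<bar>" using t by (simp add: power2_eq_square)
  also have "t * \<bar>b\<bar> < a" using a by (simp add: t_def field_simps)
  finally show False using a by simp
qed

text \<open>Perturbing the maximiser along its residual \<open>M v\<^sub>0 - \<mu> v\<^sub>0\<close> would otherwise increase the
  Rayleigh quotient to first order.\<close>

lemma rayleigh_maximizer_eigenvector:
  fixes M :: "real^'n^'n"
  assumes sym: "sym_mat M" and V: "subspace V" "\<forall>v\<in>V. M *v v \<in> V"
    and v0: "v0 \<in> V" "v0 \<bullet> v0 = 1"
    and max: "\<And>y. y \<in> V \<Longrightarrow> y \<bullet> (M *v y) \<le> (v0 \<bullet> (M *v v0)) * (y \<bullet> y)"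
  shows "M *v v0 = (v0 \<bullet> (M *v v0)) *\<^sub>R v0"
proof -
  define \<mu> where "\<mu> = v0 \<bullet> (M *v v0)"
  define u where "u = M *v v0 - \<mu> *\<^sub>R v0"
  have uV: "u \<in> V" using V v0 by (simp add: u_def subspace_diff subspace_scale)
  have uv0: "u \<bullet> v0 = 0"
    using v0 by (simp add: u_def inner_diff_left \<mu>_def inner_commute[of "M *v v0" v0])
  have uM: "u \<bullet> (M *v v0) = u \<bullet> u"
proof -
    have "M *v v0 = u + \<mu> *\<^sub>R v0" by (simp add: u_def)
    then show ?thesis by (simp add: inner_add_right uv0)
  qed
  have "u \<bullet> u = 0"
  proof (rule linear_dominated_by_quadratic_eq_0)
    fix t :: real
    have "v0 + t *\<^sub>R u \<in> V" using V(1) v0 uV by (simp add: subspace_add subspace_scale)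
    from max[OF this]
    have "(v0 + t *\<^sub>R u) \<bullet> (M *v (v0 + t *\<^sub>R u)) \<le> \<mu> * ((v0 + t *\<^sub>R u) \<bullet> (v0 + t *\<^sub>R u))"
      by (simp add: \<mu>_def)
    moreover have "v0 \<bullet> (M *v u) = u \<bullet> (M *v v0)"
      using sym_mat_inner_commute[OF sym, of u v0] by (simp add: inner_commute)
    ultimately have "\<mu> + 2 * t * (u \<bullet> u) + t\<^sup>2 * (u \<bullet> (M *v u)) \<le> \<mu> * (1 + t\<^sup>2 * (u \<bullet> u))"
      using v0(2) uv0
      by (simp add: matrix_vector_right_distrib inner_add_left
          inner_add_right uM \<mu>_def power2_eq_square algebra_simps inner_commute[of v0 u])
    then show "2 * t * (u \<bullet> u) \<le> t\<^sup>2 * (\<mu> * (u \<bullet> u) - u \<bullet> (M *v u))"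
      by (simp add: algebra_simps)
  qed simp
  then show ?thesis by (simp add: u_def \<mu>_def)
qed

lemma invariant_subspace_unit_eigenvector:
  fixes M :: "real^'n^'n"
  assumes sym: "sym_mat M" and V: "subspace V" "\<forall>v\<in>V. M *v v \<in> V" "V \<noteq> {0}"
  obtains v0 where "v0 \<in> V" "norm v0 = 1" "M *v v0 = (v0 \<bullet> (M *v v0)) *\<^sub>R v0"
proof -
  obtain v where v: "v \<in> V" "v \<noteq> 0" using V(1,3) subspace_0 by blast
  define K where "K = V \<inter> sphere 0 1"
  have "compact K" unfolding K_def
    using closed_subspace[OF V(1)] by (intro closed_Int_compact) auto
  moreover have "(1 / norm v) *\<^sub>R v \<in> K" using v V(1) by (simp add: K_def subspace_scale)
  moreover have "continuous_on K (\<lambda>x. x \<bullet> (M *v x))"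
    by (intro continuous_intros linear_continuous_on) (simp add: linear_linear)
  ultimately obtain v0 where v0K: "v0 \<in> K" and v0max: "\<forall>y\<in>K. y \<bullet> (M *v y) \<le> v0 \<bullet> (M *v v0)"
    using continuous_attains_sup by (metis empty_iff)
  have v0V: "v0 \<in> V" and nv0: "norm v0 = 1" using v0K by (auto simp: K_def)
  have max: "y \<bullet> (M *v y) \<le> (v0 \<bullet> (M *v v0)) * (y \<bullet> y)" if "y \<in> V" for y
  proof (cases "y = 0")
    case False
    have "(1 / norm y) *\<^sub>R y \<in> K" using that False V(1) by (simp add: K_def subspace_scale)
    moreover have "((1 / norm y) *\<^sub>R y) \<bullet> (M *v ((1 / norm y) *\<^sub>R y))
        = (1 / norm y)\<^sup>2 * (y \<bullet> (M *v y))"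
      by (simp add: matrix_vector_mult_scaleR power2_eq_square)
    ultimately have "(1 / norm y)\<^sup>2 * (y \<bullet> (M *v y)) \<le> v0 \<bullet> (M *v v0)"
      using v0max by metis
    then show ?thesis using False by (simp add: field_simps power2_norm_eq_inner)
  qed simp
  show ?thesis
    using that[OF v0V nv0] rayleigh_maximizer_eigenvector[OF sym V(1,2) v0V _ max] nv0
    by (simp add: norm_eq_1)
qed

lemma subspace_le_span_insert_unit:
  assumes V: "subspace V" and v0: "v0 \<in> V" "v0 \<bullet> v0 = 1"
    and B: "span B = V \<inter> {x. v0 \<bullet> x = 0}"
  shows "V \<subseteq> span (insert v0 B)"
proof
  fix x assume x: "x \<in> V"
  have "x - (v0 \<bullet> x) *\<^sub>R v0 \<in> V \<inter> {x. v0 \<bullet> x = 0}"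
    using x v0 V by (simp add: subspace_diff subspace_scale inner_diff_right)
  then have "x - (v0 \<bullet> x) *\<^sub>R v0 \<in> span (insert v0 B)"
    using B span_mono[of B "insert v0 B"] by auto
  moreover have "(v0 \<bullet> x) *\<^sub>R v0 \<in> span (insert v0 B)"
    by (simp add: span_base span_scale)
  ultimately show "x \<in> span (insert v0 B)"
    using span_add by fastforce
qed

definition orthonormal_eigenbasis :: "real^'n^'n \<Rightarrow> (real^'n) set \<Rightarrow> bool" where
  "orthonormal_eigenbasis M B \<longleftrightarrow> finite B
     \<and> (\<forall>e\<in>B. norm e = 1 \<and> M *v e = (e \<bullet> (M *v e)) *\<^sub>R e)
     \<and> pairwise orthogonal B \<and> span B = UNIV"

lemma symmetric_invariant_subspace_eigenbasis:
  fixes M :: "real^'n^'n"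
  assumes sym: "sym_mat M"
  shows "subspace V \<Longrightarrow> (\<forall>v\<in>V. M *v v \<in> V) \<Longrightarrow>
    \<exists>B. finite B \<and> B \<subseteq> V \<and> (\<forall>e\<in>B. norm e = 1 \<and> M *v e = (e \<bullet> (M *v e)) *\<^sub>R e)
       \<and> pairwise orthogonal B \<and> span B = V"
proof (induction "dim V" arbitrary: V rule: less_induct)
  case less
  show ?case
  proof (cases "V = {0}")
    case True
    then show ?thesis by (intro exI[of _ "{}"]) auto
  next
    case False
    with invariant_subspace_unit_eigenvector[OF sym less.prems] obtain v0
      where v0V: "v0 \<in> V" and nv0: "norm v0 = 1" and Mv0: "M *v v0 = (v0 \<bullet> (M *v v0)) *\<^sub>R v0"
      by blast
    have v0v0: "v0 \<bullet> v0 = 1" using nv0 by (simp add: norm_eq_1)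
    define V' where "V' = V \<inter> {x. v0 \<bullet> x = 0}"
    have subV': "subspace V'" unfolding V'_def
      using less.prems(1) subspace_hyperplane[of v0] unfolding subspace_def by auto
    have invV': "\<forall>w\<in>V'. M *v w \<in> V'"
    proof
      fix w assume w: "w \<in> V'"
      have "v0 \<bullet> (M *v w) = (M *v v0) \<bullet> w" by (rule sym_mat_inner_commute[OF sym, symmetric])
      also have "\<dots> = (v0 \<bullet> (M *v v0)) * (v0 \<bullet> w)" by (subst Mv0) simp
      also have "\<dots> = 0" using w by (simp add: V'_def)
      finally show "M *v w \<in> V'" using w less.prems(2) by (simp add: V'_def)
    qed
    have "V' \<subset> V" using v0V v0v0 unfolding V'_def by force
    then have "dim V' < dim V"
      using dim_psubset[of V' V] subV' less.prems(1) by (metis span_eq_iff)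
    from less.hyps[OF this subV' invV'] obtain B' where B':
      "finite B'" "B' \<subseteq> V'" "\<forall>e\<in>B'. norm e = 1 \<and> M *v e = (e \<bullet> (M *v e)) *\<^sub>R e"
      "pairwise orthogonal B'" "span B' = V'" by blast
    have span: "V \<subseteq> span (insert v0 B')"
      using less.prems(1) v0V v0v0 B'(5) unfolding V'_def by (rule subspace_le_span_insert_unit)
    show ?thesis
    proof (intro exI[of _ "insert v0 B'"] conjI)
      show "insert v0 B' \<subseteq> V" using B' v0V by (auto simp: V'_def)
      then show "span (insert v0 B') = V"
        using span less.prems(1) by (metis span_minimal subset_antisym)
      show "pairwise orthogonal (insert v0 B')"
        using B'(2,4) unfolding pairwise_insert by (auto simp: V'_def orthogonal_def inner_commute)
    qed (use B' nv0 Mv0 in auto)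
  qed
qed

theorem symmetric_orthonormal_eigenbasis:
  "sym_mat M \<Longrightarrow> \<exists>B. orthonormal_eigenbasis M B"
  using symmetric_invariant_subspace_eigenbasis[of M UNIV]
  unfolding orthonormal_eigenbasis_def by (auto simp: subspace_UNIV)

context
  fixes M :: "real^'n^'n" and B :: "(real^'n) set"
  assumes B: "orthonormal_eigenbasis M B"
begin

lemma eigenbasis_finite: "finite B"
  using B by (simp add: orthonormal_eigenbasis_def)

lemma eigenbasis_unit: "e \<in> B \<Longrightarrow> e \<bullet> e = 1"
  using B by (simp add: orthonormal_eigenbasis_def norm_eq_1)

lemma eigenbasis_eigenvector: "e \<in> B \<Longrightarrow> M *v e = (e \<bullet> (M *v e)) *\<^sub>R e"
  using B by (simp add: orthonormal_eigenbasis_def)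

lemma eigenbasis_orthogonal: "e \<in> B \<Longrightarrow> f \<in> B \<Longrightarrow> e \<noteq> f \<Longrightarrow> e \<bullet> f = 0"
  using B unfolding orthonormal_eigenbasis_def pairwise_def orthogonal_def by blast

lemma eigenbasis_coordinate: "e0 \<in> B \<Longrightarrow> (\<Sum>e\<in>B. u e *\<^sub>R e) \<bullet> e0 = u e0"
proof -
  assume e0: "e0 \<in> B"
  have "(\<Sum>e\<in>B. u e *\<^sub>R e) \<bullet> e0 = (\<Sum>e\<in>B. if e = e0 then u e0 else 0)"
    unfolding inner_sum_left
    using e0 eigenbasis_unit eigenbasis_orthogonal by (intro sum.cong) auto
  then show ?thesis using e0 eigenbasis_finite by simp
qed

lemma eigenbasis_expansion: "v = (\<Sum>e\<in>B. (v \<bullet> e) *\<^sub>R e)"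
proof -
  have "v \<in> span B" using B by (simp add: orthonormal_eigenbasis_def)
  then obtain u where u: "v = (\<Sum>e\<in>B. u e *\<^sub>R e)"
    using span_finite[OF eigenbasis_finite] by auto
  then have "\<And>e. e \<in> B \<Longrightarrow> v \<bullet> e = u e" using eigenbasis_coordinate by simp
  then show ?thesis by (subst u) (intro sum.cong, auto)
qed

lemma eigenbasis_parseval: "v \<bullet> w = (\<Sum>e\<in>B. (v \<bullet> e) * (w \<bullet> e))"
proof -
  have "v \<bullet> w = (\<Sum>e\<in>B. (v \<bullet> e) *\<^sub>R e) \<bullet> w" using eigenbasis_expansion[of v] by simp
  also have "\<dots> = (\<Sum>e\<in>B. (v \<bullet> e) * (e \<bullet> w))" by (simp add: inner_sum_left)
  finally show ?thesis by (simp add: inner_commute)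
qed

lemma eigenbasis_norm2: "v \<bullet> v = (\<Sum>e\<in>B. (v \<bullet> e)\<^sup>2)"
  using eigenbasis_parseval[of v v] by (simp add: power2_eq_square)

lemma eigenbasis_nonzero_coordinate: "v \<noteq> 0 \<Longrightarrow> \<exists>e\<in>B. v \<bullet> e \<noteq> 0"
  using eigenbasis_norm2[of v] by (metis (no_types, lifting) inner_eq_zero_iff power_zero_numeral sum.neutral)

context
  assumes sym: "sym_mat M"
begin

lemma eigenbasis_inner_matrix: "e \<in> B \<Longrightarrow> (M *v v) \<bullet> e = (e \<bullet> (M *v e)) * (v \<bullet> e)"
  by (metis sym_mat_inner_commute[OF sym] eigenbasis_eigenvector inner_scaleR_right)

lemma eigenbasis_quadratic_form: "v \<bullet> (M *v v) = (\<Sum>e\<in>B. (e \<bullet> (M *v e)) * (v \<bullet> e)\<^sup>2)"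
  using eigenbasis_parseval[of v "M *v v"] eigenbasis_inner_matrix
  by (simp add: power2_eq_square mult_ac)

lemma real_eigenvalues_eigenbasis: "real_eigenvalues M = (\<lambda>e. e \<bullet> (M *v e)) ` B"
proof
  show "(\<lambda>e. e \<bullet> (M *v e)) ` B \<subseteq> real_eigenvalues M"
  proof
    fix l assume "l \<in> (\<lambda>e. e \<bullet> (M *v e)) ` B"
    then obtain e where e: "e \<in> B" "l = e \<bullet> (M *v e)" by blast
    have "e \<noteq> 0" using eigenbasis_unit[OF e(1)] by auto
    then show "l \<in> real_eigenvalues M" unfolding real_eigenvalues_def
      using eigenbasis_eigenvector[OF e(1)] e(2) by auto
  qed
  show "real_eigenvalues M \<subseteq> (\<lambda>e. e \<bullet> (M *v e)) ` B"
  proof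
    fix l assume "l \<in> real_eigenvalues M"
    then obtain v where v: "v \<noteq> 0" "M *v v = l *\<^sub>R v" by (auto simp: real_eigenvalues_def)
    then obtain e where e: "e \<in> B" "v \<bullet> e \<noteq> 0" using eigenbasis_nonzero_coordinate by blast
    have "l * (v \<bullet> e) = (e \<bullet> (M *v e)) * (v \<bullet> e)"
      using eigenbasis_inner_matrix[OF e(1), of v] v(2) by simp
    then show "l \<in> (\<lambda>e. e \<bullet> (M *v e)) ` B" using e by auto
  qed
qed

lemma eigenbasis_nonempty: "B \<noteq> {}"
  using eigenbasis_nonzero_coordinate[of "axis undefined 1"] by (auto simp: axis_eq_0_iff)

lemma lam_min_max_eigenbasis:
  "lam_min M = Min ((\<lambda>e. e \<bullet> (M *v e)) ` B)" "lam_max M = Max ((\<lambda>e. e \<bullet> (M *v e)) ` B)"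
  by (simp_all add: lam_min_def lam_max_def real_eigenvalues_eigenbasis)

lemma lam_min_le_eigenvalue: "e \<in> B \<Longrightarrow> lam_min M \<le> e \<bullet> (M *v e)"
  and eigenvalue_le_lam_max: "e \<in> B \<Longrightarrow> e \<bullet> (M *v e) \<le> lam_max M"
  using lam_min_max_eigenbasis eigenbasis_finite by auto

end
end

context
  fixes M :: "real^'n^'n"
  assumes sym: "sym_mat M"
begin

lemma rayleigh_lower: "lam_min M * (v \<bullet> v) \<le> v \<bullet> (M *v v)"
  and rayleigh_upper: "v \<bullet> (M *v v) \<le> lam_max M * (v \<bullet> v)"
proof -
  obtain B where B: "orthonormal_eigenbasis M B" using symmetric_orthonormal_eigenbasis[OF sym] by blast
  note quad = eigenbasis_quadratic_form[OF B sym, of v] and norm2 = eigenbasis_norm2[OF B, of v]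
  have "lam_min M * (v \<bullet> v) = (\<Sum>e\<in>B. lam_min M * (v \<bullet> e)\<^sup>2)"
    by (simp add: norm2 sum_distrib_left)
  also have "\<dots> \<le> v \<bullet> (M *v v)"
    unfolding quad by (intro sum_mono mult_right_mono lam_min_le_eigenvalue[OF B sym]) auto
  finally show "lam_min M * (v \<bullet> v) \<le> v \<bullet> (M *v v)" .
  have "v \<bullet> (M *v v) \<le> (\<Sum>e\<in>B. lam_max M * (v \<bullet> e)\<^sup>2)"
    unfolding quad by (intro sum_mono mult_right_mono eigenvalue_le_lam_max[OF B sym]) auto
  also have "\<dots> = lam_max M * (v \<bullet> v)"
    by (simp add: norm2 sum_distrib_left)
  finally show "v \<bullet> (M *v v) \<le> lam_max M * (v \<bullet> v)" .
qed

lemma lam_min_eigenvector: "\<exists>v. v \<noteq> 0 \<and> M *v v = lam_min M *\<^sub>R v"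
  and lam_max_eigenvector: "\<exists>v. v \<noteq> 0 \<and> M *v v = lam_max M *\<^sub>R v"
proof -
  obtain B where B: "orthonormal_eigenbasis M B" using symmetric_orthonormal_eigenbasis[OF sym] by blast
  have "lam_min M \<in> real_eigenvalues M" "lam_max M \<in> real_eigenvalues M"
    using lam_min_max_eigenbasis[OF B sym] real_eigenvalues_eigenbasis[OF B sym]
      eigenbasis_finite[OF B] eigenbasis_nonempty[OF B sym] by auto
  then show "\<exists>v. v \<noteq> 0 \<and> M *v v = lam_min M *\<^sub>R v" "\<exists>v. v \<noteq> 0 \<and> M *v v = lam_max M *\<^sub>R v"
    by (auto simp: real_eigenvalues_def)
qed

lemma lam_max_le_rayleigh_bound:
  assumes "\<And>v. v \<bullet> (M *v v) \<le> C * (v \<bullet> v)"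
  shows "lam_max M \<le> C"
proof -
  obtain v where v: "v \<noteq> 0" "M *v v = lam_max M *\<^sub>R v" using lam_max_eigenvector by blast
  then have "lam_max M * (v \<bullet> v) \<le> C * (v \<bullet> v)" using assms[of v] by simp
  then show ?thesis using v(1) by simp
qed

lemma rayleigh_bound_le_lam_min:
  assumes "\<And>v. C * (v \<bullet> v) \<le> v \<bullet> (M *v v)"
  shows "C \<le> lam_min M"
proof -
  obtain v where v: "v \<noteq> 0" "M *v v = lam_min M *\<^sub>R v" using lam_min_eigenvector by blast
  then have "C * (v \<bullet> v) \<le> lam_min M * (v \<bullet> v)" using assms[of v] by simp
  then show ?thesis using v(1) by simp
qed

lemma lam_min_le_lam_max: "lam_min M \<le> lam_max M"
  using rayleigh_lower[of "axis undefined 1"] rayleigh_upper[of "axis undefined 1"]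
  by (simp add: inner_axis_axis)

end

lemma posdef_lam_min_pos:
  assumes "posdef M" shows "lam_min M > 0"
proof -
  have sym: "sym_mat M" using assms by (simp add: posdef_def)
  obtain v where v: "v \<noteq> 0" "M *v v = lam_min M *\<^sub>R v" using lam_min_eigenvector[OF sym] by blast
  have "0 < v \<bullet> (M *v v)" using assms v(1) by (simp add: posdef_def)
  then show ?thesis using v inner_ge_zero[of v] by (auto simp: zero_less_mult_iff)
qed

lemma cond_num_pos: "posdef M \<Longrightarrow> cond_num M > 0"
  using posdef_lam_min_pos lam_min_le_lam_max unfolding cond_num_def posdef_def
  by (metis divide_pos_pos order.strict_trans2)

definition eigen_matrix :: "(real^'n) set \<Rightarrow> (real^'n \<Rightarrow> real) \<Rightarrow> real^'n^'n" where
  "eigen_matrix B f = (\<chi> i j. \<Sum>e\<in>B. f e * e$i * e$j)"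

lemma eigen_matrix_apply:
  assumes "finite B"
  shows "eigen_matrix B f *v v = (\<Sum>e\<in>B. (f e * (e \<bullet> v)) *\<^sub>R e)"
proof -
  have "(eigen_matrix B f *v v) $ i = (\<Sum>e\<in>B. (f e * (e \<bullet> v)) *\<^sub>R e) $ i" for i
proof -
    have "(eigen_matrix B f *v v) $ i = (\<Sum>j\<in>UNIV. \<Sum>e\<in>B. f e * e$i * (e$j * v$j))"
      by (simp add: matrix_vector_mult_def eigen_matrix_def sum_distrib_right mult.assoc)
    also have "\<dots> = (\<Sum>e\<in>B. f e * e$i * (e \<bullet> v))"
      by (subst sum.swap) (simp add: inner_vec_def sum_distrib_left)
    finally show ?thesis by (simp add: sum_component mult_ac)
  qed
  then show ?thesis by (simp add: vec_eq_iff)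
qed

lemma eigen_matrix_cong: "(\<And>e. e \<in> B \<Longrightarrow> f e = g e) \<Longrightarrow> eigen_matrix B f = eigen_matrix B g"
  unfolding eigen_matrix_def by (simp add: vec_eq_iff)

lemma sym_mat_eigen_matrix: "sym_mat (eigen_matrix B f)"
  by (simp add: sym_mat_def eigen_matrix_def transpose_def vec_eq_iff mult_ac)

context
  fixes M :: "real^'n^'n" and B :: "(real^'n) set"
  assumes B: "orthonormal_eigenbasis M B"
begin

lemma eigen_matrix_coordinate: "e0 \<in> B \<Longrightarrow> (eigen_matrix B f *v v) \<bullet> e0 = f e0 * (e0 \<bullet> v)"
  using eigenbasis_coordinate[OF B, of e0 "\<lambda>e. f e * (e \<bullet> v)"]
    eigen_matrix_apply[OF eigenbasis_finite[OF B]] by simp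

lemma eigen_matrix_eqI:
  assumes "\<And>e v. e \<in> B \<Longrightarrow> (Q *v v) \<bullet> e = f e * (e \<bullet> v)"
  shows "Q = eigen_matrix B f"
proof -
  have "Q *v v = eigen_matrix B f *v v" for v
    using eigenbasis_expansion[OF B, of "Q *v v"] eigenbasis_expansion[OF B, of "eigen_matrix B f *v v"]
      assms eigen_matrix_coordinate by (metis (no_types, lifting) sum.cong)
  then show ?thesis by (simp add: matrix_eq)
qed

lemma eigen_matrix_eigenvector:
  assumes e0: "e0 \<in> B"
  shows "eigen_matrix B f *v e0 = f e0 *\<^sub>R e0"
proof -
  have "eigen_matrix B f *v e0 = (\<Sum>e\<in>B. if e = e0 then f e0 *\<^sub>R e0 else 0)"
    unfolding eigen_matrix_apply[OF eigenbasis_finite[OF B]]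
    using e0 eigenbasis_unit[OF B] eigenbasis_orthogonal[OF B] by (intro sum.cong) auto
  then show ?thesis using e0 eigenbasis_finite[OF B] by simp
qed

lemma eigen_matrix_mult: "eigen_matrix B f ** eigen_matrix B g = eigen_matrix B (\<lambda>e. f e * g e)"
proof (rule eigen_matrix_eqI)
  fix e v assume e: "e \<in> B"
  have "((eigen_matrix B f ** eigen_matrix B g) *v v) \<bullet> e
      = f e * (e \<bullet> (eigen_matrix B g *v v))"
    by (simp add: matrix_vector_mul_assoc[symmetric] eigen_matrix_coordinate[OF e])
  also have "\<dots> = f e * g e * (e \<bullet> v)"
    using eigen_matrix_coordinate[OF e, of g v] by (simp add: inner_commute)
  finally show "((eigen_matrix B f ** eigen_matrix B g) *v v) \<bullet> e = f e * g e * (e \<bullet> v)" .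
qed

lemma eigen_matrix_one: "eigen_matrix B (\<lambda>e. 1) = mat 1"
  by (rule eigen_matrix_eqI[symmetric]) (simp add: inner_commute)

lemma eigen_matrix_self: "sym_mat M \<Longrightarrow> eigen_matrix B (\<lambda>e. e \<bullet> (M *v e)) = M"
  by (rule eigen_matrix_eqI[symmetric]) (metis eigenbasis_inner_matrix[OF B] inner_commute)

lemma eigen_matrix_inner: "v \<bullet> (eigen_matrix B f *v v) = (\<Sum>e\<in>B. f e * (v \<bullet> e)\<^sup>2)"
  using eigenbasis_parseval[OF B, of v "eigen_matrix B f *v v"] eigen_matrix_coordinate
  by (simp add: power2_eq_square inner_commute mult_ac)

lemma posdef_eigen_matrix:
  assumes "\<And>e. e \<in> B \<Longrightarrow> f e > 0"
  shows "posdef (eigen_matrix B f)"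
  unfolding posdef_def
proof (intro conjI allI impI sym_mat_eigen_matrix)
  fix v :: "real^'n" assume "v \<noteq> 0"
  then obtain e0 where e0: "e0 \<in> B" "v \<bullet> e0 \<noteq> 0" using eigenbasis_nonzero_coordinate[OF B] by blast
  have "0 < f e0 * (v \<bullet> e0)\<^sup>2" using assms[OF e0(1)] e0(2) by simp
  also have "\<dots> \<le> (\<Sum>e\<in>B. f e * (v \<bullet> e)\<^sup>2)"
    using eigenbasis_finite[OF B] e0(1) assms
    by (intro member_le_sum) (auto simp: less_imp_le)
  finally show "v \<bullet> (eigen_matrix B f *v v) > 0" by (simp add: eigen_matrix_inner)
qed

end

lemma posdef_eigenvalue_pos:
  assumes "posdef M" "orthonormal_eigenbasis M B" "e \<in> B"
  shows "e \<bullet> (M *v e) > 0"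
  using assms eigenbasis_unit[OF assms(2,3)] unfolding posdef_def by (metis inner_zero_left zero_neq_one)

lemma matrix_inv_posdef_eigen_matrix:
  assumes S: "posdef S" and B: "orthonormal_eigenbasis S B"
  shows "matrix_inv S = eigen_matrix B (\<lambda>e. 1 / (e \<bullet> (S *v e)))" (is "_ = ?P")
    and "S ** matrix_inv S = mat 1"
proof -
  have sym: "sym_mat S" using S by (simp add: posdef_def)
  have pos: "\<And>e. e \<in> B \<Longrightarrow> e \<bullet> (S *v e) \<noteq> 0" using posdef_eigenvalue_pos[OF S B] by force
  have one: "eigen_matrix B (\<lambda>e. 1) = mat 1" by (rule eigen_matrix_one[OF B])
  have "S ** ?P = eigen_matrix B (\<lambda>e. (e \<bullet> (S *v e)) * (1 / (e \<bullet> (S *v e))))"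
    by (subst (1) eigen_matrix_self[OF B sym, symmetric]) (rule eigen_matrix_mult[OF B])
  also have "\<dots> = mat 1" using pos by (subst one[symmetric], intro eigen_matrix_cong) simp
  finally have SP: "S ** ?P = mat 1" .
  have "?P ** S = eigen_matrix B (\<lambda>e. (1 / (e \<bullet> (S *v e))) * (e \<bullet> (S *v e)))"
    by (subst (2) eigen_matrix_self[OF B sym, symmetric]) (rule eigen_matrix_mult[OF B])
  also have "\<dots> = mat 1" using pos by (subst one[symmetric], intro eigen_matrix_cong) simp
  finally have PS: "?P ** S = mat 1" .
  from SP PS have "\<exists>P. S ** P = mat 1 \<and> P ** S = mat 1" by blast
  then have inv: "S ** matrix_inv S = mat 1 \<and> matrix_inv S ** S = mat 1"
    unfolding matrix_inv_def by (rule someI_ex)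
  then show "S ** matrix_inv S = mat 1" by simp
  have "matrix_inv S = matrix_inv S ** (S ** ?P)" using SP by simp
  also have "\<dots> = ?P" using inv by (simp add: matrix_mul_assoc)
  finally show "matrix_inv S = ?P" .
qed

lemma posdef_mult_matrix_inv: "posdef S \<Longrightarrow> S ** matrix_inv S = mat 1"
  using symmetric_orthonormal_eigenbasis matrix_inv_posdef_eigen_matrix(2) by (metis posdef_def)

lemma posdef_matrix_inv: "posdef S \<Longrightarrow> posdef (matrix_inv S)"
  using symmetric_orthonormal_eigenbasis[of S] posdef_eigen_matrix matrix_inv_posdef_eigen_matrix(1)
    posdef_eigenvalue_pos unfolding posdef_def
  by (metis (no_types, lifting) divide_pos_pos zero_less_one)

lemma inner_matrix_inv_bounds:
  assumes S: "posdef S"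
  shows "(v \<bullet> v) / lam_max S \<le> v \<bullet> (matrix_inv S *v v)"
    and "v \<bullet> (matrix_inv S *v v) \<le> (v \<bullet> v) / lam_min S"
proof -
  have sym: "sym_mat S" using S by (simp add: posdef_def)
  obtain B where B: "orthonormal_eigenbasis S B" using symmetric_orthonormal_eigenbasis[OF sym] by blast
  have pos: "\<And>e. e \<in> B \<Longrightarrow> e \<bullet> (S *v e) > 0" using posdef_eigenvalue_pos[OF S B] by blast
  have q: "v \<bullet> (matrix_inv S *v v) = (\<Sum>e\<in>B. (v \<bullet> e)\<^sup>2 / (e \<bullet> (S *v e)))"
    by (simp add: matrix_inv_posdef_eigen_matrix(1)[OF S B] eigen_matrix_inner[OF B])
  have lmin: "lam_min S > 0" by (rule posdef_lam_min_pos[OF S])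
  have "(v \<bullet> v) / lam_max S = (\<Sum>e\<in>B. (v \<bullet> e)\<^sup>2 / lam_max S)"
    by (simp add: eigenbasis_norm2[OF B, of v] sum_divide_distrib)
  also have "\<dots> \<le> (\<Sum>e\<in>B. (v \<bullet> e)\<^sup>2 / (e \<bullet> (S *v e)))"
    by (intro sum_mono divide_left_mono eigenvalue_le_lam_max[OF B sym] mult_pos_pos pos)
      (auto intro: order.strict_trans2[OF lmin lam_min_le_lam_max[OF sym]])
  finally show "(v \<bullet> v) / lam_max S \<le> v \<bullet> (matrix_inv S *v v)" using q by simp
  have "(\<Sum>e\<in>B. (v \<bullet> e)\<^sup>2 / (e \<bullet> (S *v e))) \<le> (\<Sum>e\<in>B. (v \<bullet> e)\<^sup>2 / lam_min S)"
    by (intro sum_mono divide_left_mono lam_min_le_eigenvalue[OF B sym] mult_pos_pos pos lmin) auto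
  also have "\<dots> = (v \<bullet> v) / lam_min S"
    by (simp add: eigenbasis_norm2[OF B, of v] sum_divide_distrib)
  finally show "v \<bullet> (matrix_inv S *v v) \<le> (v \<bullet> v) / lam_min S" using q by simp
qed

lemma psd_sqrt_eigen_matrix:
  assumes B: "orthonormal_eigenbasis M B" and pos: "\<And>e. e \<in> B \<Longrightarrow> p e > 0"
  shows "psd_sqrt (eigen_matrix B p) = eigen_matrix B (\<lambda>e. sqrt (p e))"
  unfolding psd_sqrt_def
proof (rule the_equality)
  let ?R = "eigen_matrix B (\<lambda>e. sqrt (p e))"
  have "?R ** ?R = eigen_matrix B p"
    using eigen_matrix_mult[OF B] eigen_matrix_cong[of B "\<lambda>e. sqrt (p e) * sqrt (p e)" p] pos
    by (simp add: less_imp_le)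
  then show "posdef ?R \<and> ?R ** ?R = eigen_matrix B p"
    using posdef_eigen_matrix[OF B] pos by simp
  fix R assume R: "posdef R \<and> R ** R = eigen_matrix B p"
  have Re: "R *v e = sqrt (p e) *\<^sub>R e" if e: "e \<in> B" for e
proof -
    define s where "s = sqrt (p e)"
    have s: "s > 0" "s * s = p e" using pos[OF e] by (auto simp: s_def)
    define w where "w = R *v e - s *\<^sub>R e"
    have "R *v (R *v e) = p e *\<^sub>R e"
      using R eigen_matrix_eigenvector[OF B e, of p] by (simp add: matrix_vector_mul_assoc)
    then have "R *v w = - s *\<^sub>R w"
      by (simp add: w_def matrix_vector_mult_diff_distrib algebra_simps
          scaleR_diff_right s(2)[symmetric])
    then have "w \<bullet> (R *v w) \<le> 0" using s by simp
    then have "w = 0" using R unfolding posdef_def by (meson not_le)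
    then show ?thesis by (simp add: w_def s_def)
  qed
  show "R = ?R"
  proof (rule eigen_matrix_eqI[OF B])
    fix e v assume e: "e \<in> B"
    have "(R *v v) \<bullet> e = v \<bullet> (R *v e)"
      using R by (simp add: posdef_def sym_mat_inner_commute)
    then show "(R *v v) \<bullet> e = sqrt (p e) * (e \<bullet> v)" by (simp add: Re[OF e] inner_commute)
  qed
qed

lemma psd_sqrt_posdef:
  assumes M: "posdef M"
  shows "posdef (psd_sqrt M)" and "psd_sqrt M ** psd_sqrt M = M"
proof -
  have sym: "sym_mat M" using M by (simp add: posdef_def)
  obtain B where B: "orthonormal_eigenbasis M B" using symmetric_orthonormal_eigenbasis[OF sym] by blast
  have pos: "\<And>e. e \<in> B \<Longrightarrow> e \<bullet> (M *v e) > 0" using posdef_eigenvalue_pos[OF M B] by blast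
  have sqrt: "psd_sqrt M = eigen_matrix B (\<lambda>e. sqrt (e \<bullet> (M *v e)))"
    using psd_sqrt_eigen_matrix[OF B, of "\<lambda>e. e \<bullet> (M *v e)"] pos eigen_matrix_self[OF B sym]
    by simp
  show "posdef (psd_sqrt M)" unfolding sqrt by (rule posdef_eigen_matrix[OF B]) (simp add: pos)
  have "psd_sqrt M ** psd_sqrt M = eigen_matrix B (\<lambda>e. e \<bullet> (M *v e))"
    unfolding sqrt eigen_matrix_mult[OF B] using pos
    by (intro eigen_matrix_cong) (simp add: less_imp_le)
  then show "psd_sqrt M ** psd_sqrt M = M" using eigen_matrix_self[OF B sym] by simp
qed

section \<open>Elementary estimates\<close>

lemma second_order_taylor_bound:
  fixes g :: "'a::euclidean_space \<Rightarrow> real" and Dg :: "'a \<Rightarrow> 'a" and Hg :: "'a \<Rightarrow> 'a \<Rightarrow> 'a"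
  assumes g': "\<forall>y\<in>cball c r. (g has_derivative (\<lambda>h. Dg y \<bullet> h)) (at y within cball c r)"
    and Dg': "\<forall>y\<in>cball c r. (Dg has_derivative Hg y) (at y within cball c r)"
    and Hg_bound: "\<forall>y\<in>cball c r. onorm (Hg y) \<le> K"
    and x: "x \<in> cball c r"
  shows "\<bar>g x - g c - Dg c \<bullet> (x - c)\<bar> \<le> K / 2 * (norm (x - c))\<^sup>2"
proof (cases "x = c")
  case False
  define u where "u = x - c"
  have seg: "c + t *\<^sub>R u \<in> cball c r" if "t \<in> {0..1}" for t
    using x that by (auto simp: u_def dist_norm norm_minus_commute mult_left_le_one_le
        intro: order_trans[of _ "norm u"])
  have c: "c \<in> cball c r" using seg[of 0] by simp
  have Dg_lipschitz: "norm (Dg y - Dg c) \<le> K * norm (y - c)" if "y \<in> cball c r" for y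
    by (rule differentiable_bound[where f'=Hg and S="cball c r"]) (use Dg' Hg_bound that c in auto)
  define f where "f t = g (c + t *\<^sub>R u) - t * (Dg c \<bullet> u)" for t
  have "norm (f 1 - f 0) \<le> K / 2 * (norm u)\<^sup>2 * 1\<^sup>2 - K / 2 * (norm u)\<^sup>2 * 0\<^sup>2"
  proof (rule differentiable_bound_general[of 0 1 f "\<lambda>t. K / 2 * (norm u)\<^sup>2 * t\<^sup>2"
        "\<lambda>t. Dg (c + t *\<^sub>R u) \<bullet> u - Dg c \<bullet> u" "\<lambda>t. K * (norm u)\<^sup>2 * t"])
    have "continuous_on (cball c r) g"
      using g' by (intro has_derivative_continuous_on) auto
    moreover have "continuous_on {0..1} (\<lambda>t. c + t *\<^sub>R u)" by (intro continuous_intros)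
    ultimately have "continuous_on {0..1} (\<lambda>t. g (c + t *\<^sub>R u))"
      using continuous_on_compose2 seg by blast
    then show "continuous_on {0..1} f"
      unfolding f_def by (intro continuous_intros)
    fix t :: real assume t: "0 < t" "t < 1"
    have "t * norm (c - x) < norm (c - x)" using t False by simp
    then have "c + t *\<^sub>R u \<in> ball c r"
      using x t by (simp add: u_def dist_norm norm_minus_commute)
    then have "(g has_derivative (\<lambda>h. Dg (c + t *\<^sub>R u) \<bullet> h)) (at (c + t *\<^sub>R u))"
      using g' seg[of t] t has_derivative_subset[OF _ ball_subset_cball] at_within_open[OF _ open_ball]
      by (metis atLeastAtMost_iff less_imp_le)
    moreover have "((\<lambda>t. c + t *\<^sub>R u) has_derivative (\<lambda>h. h *\<^sub>R u)) (at t)"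
      by (auto intro!: derivative_eq_intros)
    ultimately have "((\<lambda>t. g (c + t *\<^sub>R u)) has_derivative (\<lambda>h. h * (Dg (c + t *\<^sub>R u) \<bullet> u))) (at t)"
      using diff_chain_at by (fastforce simp: o_def)
    then show "(f has_vector_derivative Dg (c + t *\<^sub>R u) \<bullet> u - Dg c \<bullet> u) (at t)"
      unfolding f_def has_vector_derivative_def
      by (auto intro!: derivative_eq_intros simp: algebra_simps)
    have "\<bar>(Dg (c + t *\<^sub>R u) - Dg c) \<bullet> u\<bar> \<le> norm (Dg (c + t *\<^sub>R u) - Dg c) * norm u"
      by (rule Cauchy_Schwarz_ineq2)
    also have "\<dots> \<le> K * norm (t *\<^sub>R u) * norm u"
      using Dg_lipschitz[OF seg[of t]] t by (intro mult_right_mono) auto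
    finally show "norm (Dg (c + t *\<^sub>R u) \<bullet> u - Dg c \<bullet> u) \<le> K * (norm u)\<^sup>2 * t"
      using t by (simp add: inner_diff_left power2_eq_square mult_ac)
  qed (auto intro!: derivative_eq_intros continuous_intros simp: has_vector_derivative_def)
  then show ?thesis by (simp add: f_def u_def algebra_simps)
qed simp

lemma exp_minus_one_le_quadratic:
  fixes u :: real
  assumes "\<bar>u\<bar> \<le> 1"
  shows "exp u - 1 \<le> u + 3/2 * u\<^sup>2"
proof -
  obtain t where t: "\<bar>t\<bar> \<le> \<bar>u\<bar>" "exp u = (\<Sum>m<2. u ^ m / fact m) + exp t / fact 2 * u ^ 2"
    using Maclaurin_exp_le[of u 2] by blast
  have "exp t \<le> 3" using t(1) assms exp_le by (smt (verit) exp_le_cancel_iff)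
  then have "exp t / 2 * u\<^sup>2 \<le> 3/2 * u\<^sup>2" by (intro mult_right_mono) auto
  moreover have "exp u = 1 + u + exp t / 2 * u\<^sup>2" using t(2) by (simp add: numeral_2_eq_2)
  ultimately show ?thesis by simp
qed

lemma lattice_pt_add: "lattice_pt X \<Longrightarrow> lattice_pt J \<Longrightarrow> lattice_pt (X + J)"
  by (simp add: lattice_pt_def Ints_add)

lemma lattice_pt_norm_le_inner:
  assumes "lattice_pt J"
  shows "norm J \<le> J \<bullet> J"
proof (cases "J = 0")
  case False
  then obtain i where i: "J $ i \<noteq> 0" by (auto simp: vec_eq_iff)
  moreover have "J $ i \<in> \<int>" using assms by (simp add: lattice_pt_def)
  ultimately have "1 \<le> \<bar>J $ i\<bar>" by (metis Ints_nonzero_abs_ge1)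
  also have "\<dots> \<le> norm J" by (rule component_le_norm_cart)
  finally have "norm J * 1 \<le> norm J * norm J" by (intro mult_left_mono) auto
  then show ?thesis by (simp add: power2_norm_eq_inner[symmetric] power2_eq_square)
qed simp

lemma le_Max_Sup_image:
  fixes f :: "'i \<Rightarrow> 'a \<Rightarrow> real"
  assumes "finite I" "i \<in> I" "bdd_above (f i ` K)" "y \<in> K"
  shows "f i y \<le> Max ((\<lambda>i. Sup (f i ` K)) ` I)"
  using assms by (meson Max_ge cSup_upper finite_imageI imageI order_trans)

section \<open>The diffusion matrix and the generator\<close>

lemma sigma2_mult_vector:
  assumes "finite JJ"
  shows "sigma2 JJ g x *v v = (\<Sum>J\<in>JJ. (g J x * (J \<bullet> v)) *\<^sub>R J)"
proof -
  have "(sigma2 JJ g x *v v) $ i = (\<Sum>J\<in>JJ. (g J x * (J \<bullet> v)) *\<^sub>R J) $ i" for i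
proof -
    have "(sigma2 JJ g x *v v) $ i = (\<Sum>k\<in>UNIV. \<Sum>J\<in>JJ. J$i * g J x * (J$k * v$k))"
      by (simp add: matrix_vector_mult_def sigma2_def sum_distrib_left sum_distrib_right mult_ac)
    also have "\<dots> = (\<Sum>J\<in>JJ. J$i * g J x * (J \<bullet> v))"
      by (subst sum.swap) (simp add: inner_vec_def sum_distrib_left)
    finally show ?thesis by (simp add: sum_component mult_ac)
  qed
  then show ?thesis by (simp add: vec_eq_iff)
qed

lemma inner_sigma2:
  "finite JJ \<Longrightarrow> v \<bullet> (sigma2 JJ g x *v v) = (\<Sum>J\<in>JJ. g J x * (J \<bullet> v)\<^sup>2)"
  by (simp add: sigma2_mult_vector inner_sum_right power2_eq_square inner_commute mult_ac)

lemma sym_mat_sigma2: "sym_mat (sigma2 JJ g x)"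
  by (simp add: sym_mat_def sigma2_def transpose_def vec_eq_iff mult_ac)

lemma trace_sigma2: "trace (sigma2 JJ g x) = (\<Sum>J\<in>JJ. g J x * (J \<bullet> J))"
proof -
  have "trace (sigma2 JJ g x) = (\<Sum>J\<in>JJ. \<Sum>i\<in>UNIV. g J x * (J$i * J$i))"
    by (simp add: trace_def sigma2_def) (subst sum.swap, simp add: mult_ac)
  then show ?thesis by (simp add: inner_vec_def sum_distrib_left)
qed

lemma posdef_sigma2:
  assumes fin: "finite JJ" and nonneg: "\<forall>J x. g J x \<ge> 0" and pos: "\<forall>J\<in>JJ. g J x > 0"
    and span: "\<forall>j. \<exists>k :: real^'d \<Rightarrow> nat. axis j 1 = (\<Sum>J\<in>JJ. real (k J) *\<^sub>R J)"
  shows "posdef (sigma2 JJ g x)"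
  unfolding posdef_def
proof (intro conjI sym_mat_sigma2 allI impI)
  fix v :: "real^'d" assume "v \<noteq> 0"
  then obtain j where j: "v $ j \<noteq> 0" by (auto simp: vec_eq_iff)
  obtain k :: "real^'d \<Rightarrow> nat" where k: "axis j 1 = (\<Sum>J\<in>JJ. real (k J) *\<^sub>R J)"
    using span by blast
  have "v $ j = axis j 1 \<bullet> v" by (simp add: inner_axis')
  also have "\<dots> = (\<Sum>J\<in>JJ. real (k J) * (J \<bullet> v))" by (simp add: k inner_sum_left)
  finally have "v $ j = (\<Sum>J\<in>JJ. real (k J) * (J \<bullet> v))" .
  with j obtain J0 where J0: "J0 \<in> JJ" "J0 \<bullet> v \<noteq> 0"
    by (metis (no_types, lifting) mult_zero_right sum.neutral)
  have "0 < g J0 x * (J0 \<bullet> v)\<^sup>2" using pos J0 by simp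
  also have "\<dots> \<le> (\<Sum>J\<in>JJ. g J x * (J \<bullet> v)\<^sup>2)"
    using fin J0(1) nonneg by (intro member_le_sum) auto
  finally show "v \<bullet> (sigma2 JJ g x *v v) > 0" by (simp add: inner_sigma2[OF fin])
qed

lemma trace_eq_sum_inner_axis: "trace (M :: real^'n^'n) = (\<Sum>i\<in>UNIV. axis i 1 \<bullet> (M *v axis i 1))"
  unfolding trace_def
  by (simp add: inner_axis' matrix_vector_mult_basis column_def)

lemma lyapunov_inner:
  assumes "A ** S + S ** transpose A + Q = 0" and "sym_mat S"
  shows "2 * (w \<bullet> (A *v (S *v w))) = - (w \<bullet> (Q *v w))"
proof -
  have "w \<bullet> ((A ** S + S ** transpose A + Q) *v w) = 0" using assms(1) by simp
  moreover have "w \<bullet> ((S ** transpose A) *v w) = w \<bullet> (A *v (S *v w))"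
proof -
    have "w \<bullet> ((S ** transpose A) *v w) = (S *v w) \<bullet> (transpose A *v w)"
      by (simp add: matrix_vector_mul_assoc[symmetric] sym_mat_inner_commute[OF assms(2)])
    also have "\<dots> = w \<bullet> (A *v (S *v w))"
      by (simp add: inner_commute dot_lmul_matrix[symmetric])
    finally show ?thesis .
  qed
  ultimately show ?thesis
    by (simp add: matrix_vector_mult_add_rdistrib inner_add_right matrix_vector_mul_assoc[symmetric])
qed

text \<open>The jumps suppressed by the restriction are exactly those leaving the ball, and there the
  test function does not decrease.\<close>

lemma gen_le_unrestricted:
  assumes X: "X \<in> tball S n \<delta> c" and lat: "\<forall>J\<in>JJ. lattice_pt J" and nonneg: "\<forall>J x. g J x \<ge> 0"
    and outside: "\<And>V. real n * \<delta> < snorm S (V - real n *\<^sub>R c) \<Longrightarrow> h X \<le> h V"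
  shows "gen JJ g S n \<delta> c h X \<le> real n * (\<Sum>J\<in>JJ. g J (inverse (real n) *\<^sub>R X) * (h (X + J) - h X))"
  unfolding gen_def
proof (intro mult_left_mono sum_mono)
  fix J assume J: "J \<in> JJ"
  show "g_restr g S n \<delta> c J X * (h (X + J) - h X) \<le> g J (inverse (real n) *\<^sub>R X) * (h (X + J) - h X)"
  proof (cases "X + J \<in> tball S n \<delta> c")
    case False
    have "lattice_pt (X + J)" using X lat J by (intro lattice_pt_add) (auto simp: tball_def)
    then have "h X \<le> h (X + J)" using False by (intro outside) (auto simp: tball_def)
    then show ?thesis using False nonneg by (simp add: g_restr_def)
  qed (use X in \<open>simp add: g_restr_def\<close>)
qed simp

lemma exp_test_function_drift:
  fixes w \<Delta> :: "'i \<Rightarrow> real"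
  assumes "finite I" and w: "\<forall>i\<in>I. w i \<ge> 0" and N: "N > 0" and \<theta>: "\<theta> > 0"
    and small: "\<forall>i\<in>I. \<bar>\<theta> * \<Delta> i / N\<bar> \<le> 1"
    and first: "N * (\<Sum>i\<in>I. w i * \<Delta> i) \<le> - (5/4) * \<alpha> * h"
    and second: "\<theta> * (\<Sum>i\<in>I. w i * (\<Delta> i)\<^sup>2) \<le> \<alpha> * h / 2"
  shows "N * (\<Sum>i\<in>I. w i * (exp (\<theta> * (h + \<Delta> i) / N) - exp (\<theta> * h / N)))
    \<le> - (1/2) * inverse N * \<alpha> * \<theta> * h * exp (\<theta> * h / N)"
proof -
  define E where "E = exp (\<theta> * h / N)"
  define u where "u i = \<theta> * \<Delta> i / N" for i
  have "exp (\<theta> * (h + \<Delta> i) / N) - E = E * (exp (u i) - 1)" for i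
    by (simp add: E_def u_def distrib_left add_divide_distrib exp_add algebra_simps)
  then have "N * (\<Sum>i\<in>I. w i * (exp (\<theta> * (h + \<Delta> i) / N) - E)) = N * E * (\<Sum>i\<in>I. w i * (exp (u i) - 1))"
    by (simp add: sum_distrib_left mult_ac)
  also have "\<dots> \<le> N * E * (\<Sum>i\<in>I. w i * (u i + 3/2 * (u i)\<^sup>2))"
    using N w small exp_minus_one_le_quadratic
    by (intro mult_left_mono sum_mono) (auto simp: E_def u_def)
  also have "\<dots> = N * E * ((\<theta> / N) * (\<Sum>i\<in>I. w i * \<Delta> i)
      + 3/2 * (\<theta> / N)\<^sup>2 * (\<Sum>i\<in>I. w i * (\<Delta> i)\<^sup>2))"
proof -
    have "w i * (u i + 3/2 * (u i)\<^sup>2) = (\<theta> / N) * (w i * \<Delta> i) + 3/2 * (\<theta> / N)\<^sup>2 * (w i * (\<Delta> i)\<^sup>2)"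
      for i using N by (simp add: u_def field_simps power2_eq_square)
    then show ?thesis by (simp add: sum.distrib sum_distrib_left)
  qed
  also have "\<dots> = E * (\<theta> / N) * (N * (\<Sum>i\<in>I. w i * \<Delta> i) + 3/2 * (\<theta> * (\<Sum>i\<in>I. w i * (\<Delta> i)\<^sup>2)))"
    using N by (simp add: power2_eq_square field_simps)
  also have "\<dots> \<le> E * (\<theta> / N) * (- (5/4) * \<alpha> * h + 3/2 * (\<alpha> * h / 2))"
    using first second N \<theta> by (intro mult_left_mono add_mono) (auto simp: E_def)
  finally show ?thesis by (simp add: E_def field_simps)
qed

section \<open>The model near its equilibrium\<close>

locale jump_model =
  fixes JJ :: "(real^'d) set"
    and g :: "real^'d \<Rightarrow> real^'d \<Rightarrow> real"
    and Dg :: "real^'d \<Rightarrow> real^'d \<Rightarrow> real^'d"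
    and Hg :: "real^'d \<Rightarrow> real^'d \<Rightarrow> real^'d^'d"
    and c :: "real^'d" and \<delta>0 :: real
    and A S sig R sS :: "real^'d^'d"
    and L0 L2 Jmax \<alpha>1 :: real
  assumes JJ_fin: "finite JJ"
    and JJ_lat: "\<forall>J\<in>JJ. lattice_pt J"
    and g_nonneg: "\<forall>J x. g J x \<ge> 0"
    and \<delta>0_pos: "\<delta>0 > 0"
    and G0: "drift JJ g c = 0"
    and A_deriv: "(drift JJ g has_derivative (\<lambda>h. A *v h)) (at c)"
    and G2_1: "\<forall>J\<in>JJ. \<forall>x\<in>cball c \<delta>0.
                 (g J has_derivative (\<lambda>h. Dg J x \<bullet> h)) (at x within cball c \<delta>0)"
    and G2_2: "\<forall>J\<in>JJ. \<forall>x\<in>cball c \<delta>0.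
                 (Dg J has_derivative (\<lambda>h. Hg J x *v h)) (at x within cball c \<delta>0)"
    and G2_3: "\<forall>J\<in>JJ. continuous_on (cball c \<delta>0) (Hg J)"
    and G3: "\<exists>\<epsilon>0>0. \<forall>J\<in>JJ. g J c > 0 \<and> (\<forall>x\<in>cball c \<delta>0. g J x \<ge> \<epsilon>0 * g J c)"
    and G4: "\<forall>j. \<exists>k :: real^'d \<Rightarrow> nat. axis j 1 = (\<Sum>J\<in>JJ. real (k J) *\<^sub>R J)"
    and sig_def: "sig = sigma2 JJ g c"
    and S_posdef: "posdef S"
    and S_lyap: "A ** S + S ** transpose A + sig = 0"
    and R_def: "R = psd_sqrt (matrix_inv S)"
    and sS_def: "sS = R ** sig ** R"
    and L0_def: "L0 = Max ((\<lambda>J. Sup ((\<lambda>x. g J x / g J c) ` cball c \<delta>0)) ` JJ)"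
    and L2_def: "L2 = Max ((\<lambda>J. Sup ((\<lambda>x. onorm (\<lambda>h. Hg J x *v h) / g J c) ` cball c \<delta>0)) ` JJ)"
    and Jmax_def: "Jmax = Max ((\<lambda>J. norm (R *v J)) ` JJ)"
    and \<alpha>1_def: "\<alpha>1 = lam_min sS / 2"
begin

lemma S_sym: "sym_mat S"
  using S_posdef by (simp add: posdef_def)

lemma lam_min_S_pos: "lam_min S > 0"
  by (rule posdef_lam_min_pos[OF S_posdef])

lemma lam_max_S_pos: "lam_max S > 0"
  using lam_min_S_pos lam_min_le_lam_max[OF S_sym] by linarith

lemma R_posdef: "posdef R"
  and R_square: "R ** R = matrix_inv S"
  using psd_sqrt_posdef[OF posdef_matrix_inv[OF S_posdef]] by (simp_all add: R_def)

lemma R_inner_commute: "(R *v v) \<bullet> w = v \<bullet> (R *v w)"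
  using R_posdef by (simp add: posdef_def sym_mat_inner_commute)

lemma S_R_R: "S *v (R *v (R *v v)) = v"
  by (simp add: matrix_vector_mul_assoc R_square posdef_mult_matrix_inv[OF S_posdef])

lemma norm_R_sq: "(norm (R *v v))\<^sup>2 = v \<bullet> (matrix_inv S *v v)"
  by (simp add: power2_norm_eq_inner R_inner_commute matrix_vector_mul_assoc R_square)

lemma snorm_eq_norm_R: "snorm S V = norm (R *v V)"
  by (simp add: snorm_def norm_R_sq[symmetric])

lemma norm_R_sq_ge: "(v \<bullet> v) / lam_max S \<le> (norm (R *v v))\<^sup>2"
  and norm_R_sq_le: "(norm (R *v v))\<^sup>2 \<le> (v \<bullet> v) / lam_min S"
  using inner_matrix_inv_bounds[OF S_posdef] by (simp_all add: norm_R_sq)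

lemma rate_pos: "J \<in> JJ \<Longrightarrow> g J c > 0"
  using G3 by blast

lemma JJ_nonempty: "JJ \<noteq> {}"
  using G4 by (metis axis_eq_0_iff sum.empty zero_neq_one)

lemma sig_sym: "sym_mat sig"
  by (simp add: sig_def sym_mat_sigma2)

lemma sig_posdef: "posdef sig"
  unfolding sig_def using JJ_fin g_nonneg rate_pos G4 by (intro posdef_sigma2) auto

lemma inner_sig: "v \<bullet> (sig *v v) = (\<Sum>J\<in>JJ. g J c * (J \<bullet> v)\<^sup>2)"
  by (simp add: sig_def inner_sigma2[OF JJ_fin])

lemma inner_sS_R: "v \<bullet> (sS *v v) = (R *v v) \<bullet> (sig *v (R *v v))"
  by (simp add: sS_def matrix_vector_mul_assoc[symmetric] R_inner_commute[symmetric])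

lemma inner_sS: "v \<bullet> (sS *v v) = (\<Sum>J\<in>JJ. g J c * ((R *v J) \<bullet> v)\<^sup>2)"
  by (simp add: inner_sS_R inner_sig R_inner_commute)

lemma sS_sym: "sym_mat sS"
  using R_posdef sig_sym
  by (simp add: posdef_def sS_def sym_mat_def matrix_transpose_mul matrix_mul_assoc)

lemma sS_posdef: "posdef sS"
  unfolding posdef_def
proof (intro conjI sS_sym allI impI)
  fix v :: "real^'d" assume "v \<noteq> 0"
  then have "v \<bullet> (R *v v) > 0" using R_posdef by (simp add: posdef_def)
  then have "R *v v \<noteq> 0" by auto
  then show "v \<bullet> (sS *v v) > 0" using sig_posdef by (simp add: inner_sS_R posdef_def)
qed

lemma \<alpha>1_pos: "\<alpha>1 > 0"
  using posdef_lam_min_pos[OF sS_posdef] by (simp add: \<alpha>1_def)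

lemma trace_sS: "trace sS = (\<Sum>J\<in>JJ. g J c * ((R *v J) \<bullet> (R *v J)))"
proof -
  have "trace sS = (\<Sum>i\<in>UNIV. \<Sum>J\<in>JJ. g J c * ((R *v J) $ i)\<^sup>2)"
    by (simp add: trace_eq_sum_inner_axis inner_sS inner_axis)
  also have "\<dots> = (\<Sum>J\<in>JJ. g J c * (\<Sum>i\<in>UNIV. ((R *v J) $ i)\<^sup>2))"
    by (subst sum.swap) (simp add: sum_distrib_left)
  finally show ?thesis by (simp add: inner_vec_def power2_eq_square)
qed

lemma trace_sS_nonneg: "trace sS \<ge> 0"
  unfolding trace_sS using g_nonneg by (intro sum_nonneg) simp

lemma trace_sig: "trace sig = (\<Sum>J\<in>JJ. g J c * (J \<bullet> J))"
  by (simp add: sig_def trace_sigma2)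

lemma lam_max_sS_le: "lam_max sS \<le> cond_num sig * cond_num S * lam_min sS"
proof -
  have lmin_sig: "lam_min sig > 0" by (rule posdef_lam_min_pos[OF sig_posdef])
  have "lam_max sS \<le> lam_max sig / lam_min S"
  proof (rule lam_max_le_rayleigh_bound[OF sS_sym])
    fix v
    have "v \<bullet> (sS *v v) \<le> lam_max sig * (norm (R *v v))\<^sup>2"
      unfolding inner_sS_R power2_norm_eq_inner by (rule rayleigh_upper[OF sig_sym])
    also have "\<dots> \<le> lam_max sig * ((v \<bullet> v) / lam_min S)"
      using norm_R_sq_le lmin_sig lam_min_le_lam_max[OF sig_sym] by (intro mult_left_mono) auto
    finally show "v \<bullet> (sS *v v) \<le> lam_max sig / lam_min S * (v \<bullet> v)" by simp
  qed
  moreover have "lam_min sig / lam_max S \<le> lam_min sS"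
  proof (rule rayleigh_bound_le_lam_min[OF sS_sym])
    fix v
    have "lam_min sig / lam_max S * (v \<bullet> v) \<le> lam_min sig * (norm (R *v v))\<^sup>2"
      using mult_left_mono[OF norm_R_sq_ge[of v], of "lam_min sig"] lmin_sig by simp
    also have "\<dots> \<le> v \<bullet> (sS *v v)"
      unfolding inner_sS_R power2_norm_eq_inner by (rule rayleigh_lower[OF sig_sym])
    finally show "lam_min sig / lam_max S * (v \<bullet> v) \<le> v \<bullet> (sS *v v)" .
  qed
  moreover have "lam_max sig / lam_min S = cond_num sig * cond_num S * (lam_min sig / lam_max S)"
    using lmin_sig lam_min_S_pos lam_max_S_pos by (simp add: cond_num_def)
  moreover have "cond_num sig * cond_num S \<ge> 0"
    using lmin_sig lam_min_S_pos lam_min_le_lam_max[OF sig_sym] lam_min_le_lam_max[OF S_sym]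
    by (simp add: cond_num_def)
  ultimately show ?thesis by (smt (verit) mult_left_mono)
qed

lemma c_in_cball: "c \<in> cball c \<delta>0"
  using \<delta>0_pos by simp

lemma rate_le_L0:
  assumes J: "J \<in> JJ" and y: "y \<in> cball c \<delta>0"
  shows "g J y \<le> L0 * g J c"
proof -
  have "continuous_on (cball c \<delta>0) (g J)"
    using G2_1 J by (intro has_derivative_continuous_on[where f'="\<lambda>x h. Dg J x \<bullet> h"]) auto
  then have "compact ((\<lambda>x. g J x / g J c) ` cball c \<delta>0)"
    using rate_pos[OF J] by (intro compact_continuous_image continuous_intros) auto
  then have "g J y / g J c \<le> L0"
    unfolding L0_def using JJ_fin J y
    by (intro le_Max_Sup_image[where f="\<lambda>J x. g J x / g J c"] bounded_imp_bdd_above compact_imp_bounded)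
  then show ?thesis using rate_pos[OF J] by (simp add: divide_le_eq)
qed

lemma L0_ge_1: "L0 \<ge> 1"
  using JJ_nonempty rate_le_L0[OF _ c_in_cball] rate_pos by force

lemma hessian_le_L2:
  assumes J: "J \<in> JJ" and y: "y \<in> cball c \<delta>0"
  shows "onorm (\<lambda>h. Hg J y *v h) \<le> L2 * g J c"
proof -
  define F where "F x = (\<Sum>i\<in>UNIV. \<Sum>j\<in>UNIV. \<bar>Hg J x $ i $ j\<bar>) / g J c" for x
  have "continuous_on (cball c \<delta>0) F"
    unfolding F_def using G2_3 J rate_pos[OF J] by (intro continuous_intros continuous_on_component) auto
  then have "bdd_above (F ` cball c \<delta>0)"
    by (intro bounded_imp_bdd_above compact_imp_bounded compact_continuous_image) auto
  then obtain M where "\<forall>x\<in>cball c \<delta>0. F x \<le> M" by (auto simp: bdd_above_def)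
  moreover have "onorm (\<lambda>h. Hg J x *v h) / g J c \<le> F x" for x
    unfolding F_def using rate_pos[OF J] by (intro divide_right_mono onorm_le_matrix_component_sum) auto
  ultimately have "bdd_above ((\<lambda>x. onorm (\<lambda>h. Hg J x *v h) / g J c) ` cball c \<delta>0)"
    by (auto simp: bdd_above_def intro: order_trans)
  then have "onorm (\<lambda>h. Hg J y *v h) / g J c \<le> L2"
    unfolding L2_def using JJ_fin J y by (intro le_Max_Sup_image)
  then show ?thesis using rate_pos[OF J] by (simp add: divide_le_eq)
qed

lemma L2_nonneg: "L2 \<ge> 0"
proof -
  obtain J where J: "J \<in> JJ" using JJ_nonempty by blast
  have "0 \<le> L2 * g J c"
    using hessian_le_L2[OF J c_in_cball] onorm_pos_le[of "\<lambda>h. Hg J c *v h"] by simp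
  then show ?thesis using rate_pos[OF J] by (simp add: zero_le_mult_iff)
qed

lemma rate_taylor:
  assumes J: "J \<in> JJ" and y: "y \<in> cball c \<delta>0"
  shows "\<bar>g J y - g J c - Dg J c \<bullet> (y - c)\<bar> \<le> L2 * g J c / 2 * (norm (y - c))\<^sup>2"
  using second_order_taylor_bound[of c \<delta>0 "g J" "Dg J" "\<lambda>x h. Hg J x *v h"] G2_1 G2_2
    hessian_le_L2 J y by blast

lemma norm_R_le_Jmax: "J \<in> JJ \<Longrightarrow> norm (R *v J) \<le> Jmax"
  unfolding Jmax_def using JJ_fin by (intro Max_ge) auto

lemma norm_R_le: "norm (R *v v) \<le> norm v / sqrt (lam_min S)"
proof -
  have "norm (R *v v) \<le> sqrt ((norm v)\<^sup>2 / lam_min S)"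
    using norm_R_sq_le[of v] by (intro real_le_rsqrt) (simp add: power2_norm_eq_inner)
  then show ?thesis by (simp add: real_sqrt_divide)
qed

lemma Jmax_nonneg: "Jmax \<ge> 0"
  using JJ_nonempty norm_R_le_Jmax norm_ge_zero by (meson all_not_in_conv order_trans)

lemma A_mult_vector: "A *v h = (\<Sum>J\<in>JJ. (Dg J c \<bullet> h) *\<^sub>R J)"
proof -
  have "(g J has_derivative (\<lambda>h. Dg J c \<bullet> h)) (at c)" if J: "J \<in> JJ" for J
    using G2_1 J c_in_cball has_derivative_subset[OF _ ball_subset_cball] \<delta>0_pos
      at_within_open[of c "ball c \<delta>0"] by (metis centre_in_ball open_ball)
  then have "(drift JJ g has_derivative (\<lambda>h. \<Sum>J\<in>JJ. (Dg J c \<bullet> h) *\<^sub>R J)) (at c)"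
    unfolding drift_def[abs_def] by (auto intro!: derivative_eq_intros)
  from has_derivative_unique[OF A_deriv this] show ?thesis by meson
qed

lemma drift_linearization:
  "(\<Sum>J\<in>JJ. g J y * (w \<bullet> J)) = w \<bullet> (A *v (y - c))
     + (\<Sum>J\<in>JJ. (g J y - g J c - Dg J c \<bullet> (y - c)) * (w \<bullet> J))"
proof -
  have "(\<Sum>J\<in>JJ. g J c * (w \<bullet> J)) = w \<bullet> drift JJ g c"
    by (simp add: drift_def inner_sum_right)
  then have "(\<Sum>J\<in>JJ. g J c * (w \<bullet> J)) = 0" by (simp add: G0)
  moreover have "w \<bullet> (A *v (y - c)) = (\<Sum>J\<in>JJ. (Dg J c \<bullet> (y - c)) * (w \<bullet> J))"
    by (simp add: A_mult_vector inner_sum_right)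
  ultimately show ?thesis by (simp add: algebra_simps sum.distrib sum_subtractf)
qed

end

section \<open>Estimates at a point far from the equilibrium\<close>

locale jump_model_point = jump_model +
  fixes n :: nat and \<delta> :: real and X :: "real^'d"
    and Kst \<delta>st \<delta>st' \<theta>1 \<Lambda>bar :: real and h0 :: "real^'d \<Rightarrow> real"
  assumes n_ge: "real n \<ge> real CARD('d) ^ 4"
    and \<Lambda>bar_def: "\<Lambda>bar = trace sig / real CARD('d)"
    and Kst_def: "Kst = sqrt (2 * L0 * trace sS / (real CARD('d) * \<alpha>1))"
    and \<delta>st_def: "\<delta>st = \<delta>0 / sqrt (lam_max S)"
    and \<delta>st'_def: "\<delta>st' = \<alpha>1 * sqrt (lam_min S)
                     / (4 * real CARD('d) * \<Lambda>bar * L2 * lam_max S)"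
    and \<theta>1_def: "\<theta>1 = (1 / real CARD('d)) *
        min (1 / (3 * (Jmax / real CARD('d)) * \<delta>st))
          (min (1 / (64 * L0 * cond_num sig * cond_num S))
               (1 / (4 * (Jmax / real CARD('d))^2)))"
    and h0_def: "h0 = (\<lambda>Y. (snorm S (Y - real n *\<^sub>R c))^2)"
    and \<delta>_le: "\<delta> \<le> \<delta>st" and \<delta>_le': "L2 \<noteq> 0 \<longrightarrow> \<delta> \<le> \<delta>st'"
    and X_in: "X \<in> tball S n \<delta> c"
    and X_far: "snorm S (X - real n *\<^sub>R c) \<ge> Kst * sqrt (real n * real CARD('d))"
begin

definition Z :: "real^'d" where "Z = R *v (X - real n *\<^sub>R c)"

definition xn :: "real^'d" where "xn = inverse (real n) *\<^sub>R X"

definition increment :: "real^'d \<Rightarrow> real" where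
  "increment J = 2 * ((R *v Z) \<bullet> J) + (R *v J) \<bullet> (R *v J)"

lemma card_le_n: "real CARD('d) \<le> real n"
proof -
  have "real CARD('d) \<ge> 1" by (simp add: Suc_leI)
  then have "real CARD('d) \<le> real CARD('d) ^ 4" by (simp add: power_increasing[of 1 4, simplified])
  then show ?thesis using n_ge by linarith
qed

lemma n_pos: "real n > 0"
  using card_le_n zero_less_card_finite[where 'a='d] by linarith

lemma h0_eq: "h0 V = (norm (R *v (V - real n *\<^sub>R c)))\<^sup>2"
  by (simp add: h0_def snorm_eq_norm_R)

lemma h0_X: "h0 X = Z \<bullet> Z"
  by (simp add: h0_eq Z_def power2_norm_eq_inner)

lemma h0_step: "h0 (X + J) = h0 X + increment J"
proof -
  have "X + J - real n *\<^sub>R c = (X - real n *\<^sub>R c) + J" by simp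
  then have "R *v (X + J - real n *\<^sub>R c) = Z + R *v J"
    by (simp only: Z_def matrix_vector_right_distrib)
  then have "h0 (X + J) = (Z + R *v J) \<bullet> (Z + R *v J)"
    by (simp add: h0_eq power2_norm_eq_inner)
  also have "\<dots> = Z \<bullet> Z + 2 * (Z \<bullet> (R *v J)) + (R *v J) \<bullet> (R *v J)"
    by (simp add: inner_add_left inner_add_right inner_commute[of "R *v J" Z])
  finally show ?thesis by (simp add: h0_X increment_def R_inner_commute)
qed

lemma norm_Z_le: "norm Z \<le> real n * \<delta>"
  using X_in by (simp add: tball_def Z_def snorm_eq_norm_R)

lemma h0_le_outside: "real n * \<delta> < snorm S (V - real n *\<^sub>R c) \<Longrightarrow> h0 X \<le> h0 V"
  using norm_Z_le by (simp add: h0_def Z_def snorm_eq_norm_R power_mono)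

lemma norm_deviation_le: "norm (X - real n *\<^sub>R c) \<le> sqrt (lam_max S) * norm Z"
proof -
  have "(X - real n *\<^sub>R c) \<bullet> (X - real n *\<^sub>R c) \<le> lam_max S * (norm Z)\<^sup>2"
    using norm_R_sq_ge[of "X - real n *\<^sub>R c"] lam_max_S_pos by (simp add: Z_def field_simps)
  then have "norm (X - real n *\<^sub>R c) \<le> sqrt (lam_max S * (norm Z)\<^sup>2)"
    by (simp add: norm_eq_sqrt_inner)
  then show ?thesis by (simp add: real_sqrt_mult)
qed

lemma norm_xn_minus_c: "norm (xn - c) = norm (X - real n *\<^sub>R c) / real n"
proof -
  have "xn - c = inverse (real n) *\<^sub>R (X - real n *\<^sub>R c)"
    using n_pos by (simp add: xn_def scaleR_diff_right)
  then show ?thesis using n_pos by (simp add: divide_inverse_commute)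
qed

lemma norm_xn_minus_c_sq: "(norm (xn - c))\<^sup>2 \<le> lam_max S * (Z \<bullet> Z) / (real n)\<^sup>2"
proof -
  have "(norm (xn - c))\<^sup>2 \<le> (sqrt (lam_max S) * norm Z / real n)\<^sup>2"
    unfolding norm_xn_minus_c using norm_deviation_le n_pos
    by (intro power_mono divide_right_mono) auto
  then show ?thesis
    using lam_max_S_pos by (simp add: power_divide power_mult_distrib power2_norm_eq_inner)
qed

lemma xn_in_cball: "xn \<in> cball c \<delta>0"
proof -
  have "norm (xn - c) \<le> sqrt (lam_max S) * (real n * \<delta>) / real n"
    unfolding norm_xn_minus_c using norm_deviation_le norm_Z_le n_pos lam_max_S_pos
    by (intro divide_right_mono order_trans[OF norm_deviation_le] mult_left_mono) auto
  also have "\<dots> \<le> sqrt (lam_max S) * \<delta>st"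
    using n_pos \<delta>_le lam_max_S_pos by simp
  also have "\<dots> = \<delta>0"
    using lam_max_S_pos by (simp add: \<delta>st_def)
  finally show ?thesis by (simp add: dist_norm norm_minus_commute)
qed

lemma diffusion_bound: "real n * L0 * trace sS \<le> \<alpha>1 * (Z \<bullet> Z) / 2"
proof -
  have d: "real CARD('d) > 0" by simp
  have Kst_nonneg: "Kst \<ge> 0" and Kst_sq: "Kst\<^sup>2 = 2 * L0 * trace sS / (real CARD('d) * \<alpha>1)"
    unfolding Kst_def using L0_ge_1 trace_sS_nonneg \<alpha>1_pos d by auto
  have "Kst * sqrt (real n * real CARD('d)) \<le> norm Z"
    using X_far by (simp add: Z_def snorm_eq_norm_R)
  then have "(Kst * sqrt (real n * real CARD('d)))\<^sup>2 \<le> (norm Z)\<^sup>2"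
    using Kst_nonneg n_pos by (intro power_mono) auto
  then have "2 * L0 * trace sS / (real CARD('d) * \<alpha>1) * (real n * real CARD('d)) \<le> Z \<bullet> Z"
    using n_pos by (simp add: power_mult_distrib Kst_sq power2_norm_eq_inner)
  then show ?thesis using \<alpha>1_pos d by (simp add: field_simps)
qed

lemma jump_size_bound: "(\<Sum>J\<in>JJ. g J xn * ((R *v J) \<bullet> (R *v J))) \<le> L0 * trace sS"
proof -
  have "(\<Sum>J\<in>JJ. g J xn * ((R *v J) \<bullet> (R *v J))) \<le> (\<Sum>J\<in>JJ. L0 * g J c * ((R *v J) \<bullet> (R *v J)))"
    using rate_le_L0 xn_in_cball by (intro sum_mono mult_right_mono) auto
  also have "\<dots> = L0 * trace sS" by (simp add: trace_sS sum_distrib_left mult_ac)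
  finally show ?thesis .
qed

lemma lyapunov_drift: "2 * ((R *v Z) \<bullet> (A *v (X - real n *\<^sub>R c))) \<le> - 2 * \<alpha>1 * (Z \<bullet> Z)"
proof -
  have "X - real n *\<^sub>R c = S *v (R *v Z)" by (simp add: Z_def S_R_R)
  then have "2 * ((R *v Z) \<bullet> (A *v (X - real n *\<^sub>R c))) = - (Z \<bullet> (sS *v Z))"
    using lyapunov_inner[OF S_lyap S_sym, of "R *v Z"] by (simp add: inner_sS_R)
  also have "\<dots> \<le> - 2 * \<alpha>1 * (Z \<bullet> Z)"
    using rayleigh_lower[OF sS_sym, of Z] by (simp add: \<alpha>1_def)
  finally show ?thesis .
qed

lemma delta_condition: "L2 * lam_max S * \<delta> * trace sig \<le> \<alpha>1 / 4 * sqrt (lam_min S)"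
proof -
  have rhs: "\<alpha>1 / 4 * sqrt (lam_min S) \<ge> 0" using \<alpha>1_pos lam_min_S_pos by simp
  have tr: "trace sig = real CARD('d) * \<Lambda>bar" by (simp add: \<Lambda>bar_def)
  show ?thesis
  proof (cases "L2 = 0 \<or> \<Lambda>bar = 0")
    case False
    have "\<Lambda>bar \<ge> 0" unfolding \<Lambda>bar_def trace_sig using g_nonneg by (intro divide_nonneg_pos sum_nonneg) auto
    then have D: "4 * real CARD('d) * \<Lambda>bar * L2 * lam_max S > 0"
      using False L2_nonneg lam_max_S_pos by simp
    have "\<delta> * (4 * real CARD('d) * \<Lambda>bar * L2 * lam_max S) \<le> \<alpha>1 * sqrt (lam_min S)"
      using \<delta>_le' False D by (simp add: \<delta>st'_def le_divide_eq)
    then show ?thesis unfolding tr by (simp add: algebra_simps)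
  qed (use rhs tr in auto)
qed

definition remainder :: "real^'d \<Rightarrow> real" where
  "remainder J = g J xn - g J c - Dg J c \<bullet> (xn - c)"

lemma remainder_term_bound:
  assumes J: "J \<in> JJ"
  shows "\<bar>remainder J * ((R *v Z) \<bullet> J)\<bar>
    \<le> L2 * lam_max S * (Z \<bullet> Z) * norm Z / (2 * (real n)\<^sup>2 * sqrt (lam_min S)) * (g J c * (J \<bullet> J))"
proof -
  have "\<bar>remainder J\<bar> \<le> L2 * g J c / 2 * (lam_max S * (Z \<bullet> Z) / (real n)\<^sup>2)"
    using rate_taylor[OF J xn_in_cball] norm_xn_minus_c_sq L2_nonneg rate_pos[OF J]
    unfolding remainder_def
    by (intro order_trans[OF rate_taylor[OF J xn_in_cball]] mult_left_mono) auto
  moreover have "\<bar>(R *v Z) \<bullet> J\<bar> \<le> norm Z * ((J \<bullet> J) / sqrt (lam_min S))"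
proof -
    have "\<bar>(R *v Z) \<bullet> J\<bar> \<le> norm Z * norm (R *v J)"
      by (simp add: R_inner_commute Cauchy_Schwarz_ineq2)
    also have "\<dots> \<le> norm Z * (norm J / sqrt (lam_min S))" by (intro mult_left_mono norm_R_le) simp
    also have "\<dots> \<le> norm Z * ((J \<bullet> J) / sqrt (lam_min S))"
      using lattice_pt_norm_le_inner JJ_lat J lam_min_S_pos
      by (intro mult_left_mono divide_right_mono) auto
    finally show ?thesis .
  qed
  ultimately have "\<bar>remainder J * ((R *v Z) \<bullet> J)\<bar>
      \<le> (L2 * g J c / 2 * (lam_max S * (Z \<bullet> Z) / (real n)\<^sup>2)) * (norm Z * ((J \<bullet> J) / sqrt (lam_min S)))"
    unfolding abs_mult by (intro mult_mono) auto
  then show ?thesis by (simp add: field_simps)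
qed

lemma remainder_bound: "\<bar>2 * real n * (\<Sum>J\<in>JJ. remainder J * ((R *v Z) \<bullet> J))\<bar> \<le> \<alpha>1 * (Z \<bullet> Z) / 4"
proof -
  define C where "C = L2 * lam_max S * (Z \<bullet> Z) * norm Z / (2 * (real n)\<^sup>2 * sqrt (lam_min S))"
  have sqrt_pos: "sqrt (lam_min S) > 0" using lam_min_S_pos by simp
  have "\<bar>\<Sum>J\<in>JJ. remainder J * ((R *v Z) \<bullet> J)\<bar> \<le> (\<Sum>J\<in>JJ. C * (g J c * (J \<bullet> J)))"
    unfolding C_def using remainder_term_bound by (intro order_trans[OF sum_abs] sum_mono)
  also have "\<dots> = C * trace sig" by (simp add: trace_sig sum_distrib_left)
  finally have "\<bar>2 * real n * (\<Sum>J\<in>JJ. remainder J * ((R *v Z) \<bullet> J))\<bar> \<le> 2 * real n * (C * trace sig)"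
    using n_pos by (simp add: abs_mult)
  also have "\<dots> = (Z \<bullet> Z) * (L2 * lam_max S * (norm Z / real n) * trace sig) / sqrt (lam_min S)"
    using n_pos sqrt_pos by (simp add: C_def field_simps power2_eq_square)
  also have "\<dots> \<le> (Z \<bullet> Z) * (\<alpha>1 / 4 * sqrt (lam_min S)) / sqrt (lam_min S)"
proof -
    have "norm Z / real n \<le> \<delta>" using norm_Z_le n_pos by (simp add: divide_le_eq mult.commute)
    then have "L2 * lam_max S * (norm Z / real n) * trace sig \<le> L2 * lam_max S * \<delta> * trace sig"
      using L2_nonneg lam_max_S_pos trace_sig g_nonneg
      by (intro mult_right_mono mult_left_mono) (auto intro: sum_nonneg)
    from order_trans[OF this delta_condition] show ?thesis
      by (rule divide_right_mono[OF mult_left_mono[OF _ inner_ge_zero] less_imp_le[OF sqrt_pos]])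
  qed
  finally show ?thesis using sqrt_pos by (simp add: mult.commute)
qed

lemma h0_drift: "real n * (\<Sum>J\<in>JJ. g J xn * increment J) \<le> - (5/4) * \<alpha>1 * (Z \<bullet> Z)"
proof -
  define lin where "lin = (R *v Z) \<bullet> (A *v (X - real n *\<^sub>R c))"
  define rem where "rem = (\<Sum>J\<in>JJ. remainder J * ((R *v Z) \<bullet> J))"
  define diff where "diff = (\<Sum>J\<in>JJ. g J xn * ((R *v J) \<bullet> (R *v J)))"
  have "xn - c = inverse (real n) *\<^sub>R (X - real n *\<^sub>R c)"
    using n_pos by (simp add: xn_def scaleR_diff_right)
  then have "(R *v Z) \<bullet> (A *v (xn - c)) = inverse (real n) * lin"
    by (simp only: lin_def matrix_vector_mult_scaleR inner_scaleR_right)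
  then have "(\<Sum>J\<in>JJ. g J xn * ((R *v Z) \<bullet> J)) = inverse (real n) * lin + rem"
    unfolding rem_def remainder_def by (subst drift_linearization) simp
  moreover have "g J xn * increment J = 2 * (g J xn * ((R *v Z) \<bullet> J)) + g J xn * ((R *v J) \<bullet> (R *v J))"
    for J by (simp add: increment_def algebra_simps)
  then have "(\<Sum>J\<in>JJ. g J xn * increment J) = 2 * (\<Sum>J\<in>JJ. g J xn * ((R *v Z) \<bullet> J)) + diff"
    by (simp add: diff_def sum.distrib sum_distrib_left)
  ultimately have "real n * (\<Sum>J\<in>JJ. g J xn * increment J) = 2 * lin + 2 * real n * rem + real n * diff"
    using n_pos by (simp add: field_simps)
  moreover have "2 * real n * rem \<le> \<alpha>1 * (Z \<bullet> Z) / 4"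
    using remainder_bound unfolding rem_def by (rule abs_le_D1)
  moreover have "real n * diff \<le> real n * L0 * trace sS"
    unfolding diff_def mult.assoc using jump_size_bound n_pos by (intro mult_left_mono) auto
  ultimately show ?thesis using lyapunov_drift diffusion_bound unfolding lin_def by linarith
qed

lemma gen_h0_bound: "gen JJ g S n \<delta> c h0 X \<le> - \<alpha>1 * h0 X"
proof -
  have "gen JJ g S n \<delta> c h0 X \<le> real n * (\<Sum>J\<in>JJ. g J xn * (h0 (X + J) - h0 X))"
    unfolding xn_def by (rule gen_le_unrestricted[OF X_in JJ_lat g_nonneg]) (rule h0_le_outside)
  also have "\<dots> = real n * (\<Sum>J\<in>JJ. g J xn * increment J)" by (simp add: h0_step)
  also have "\<dots> \<le> - \<alpha>1 * h0 X"
proof -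
    have "0 \<le> \<alpha>1 * (Z \<bullet> Z)" using \<alpha>1_pos by simp
    then show ?thesis using h0_drift unfolding h0_X by (simp add: mult.assoc)
  qed
  finally show ?thesis .
qed

lemma theta_bounds:
  assumes \<theta>: "0 < \<theta>" "\<theta> \<le> \<theta>1"
  shows "\<theta> * Jmax * \<delta>st \<le> 1/3"
    and "\<theta> * Jmax\<^sup>2 \<le> real CARD('d) / 4"
    and "\<theta> * (64 * L0 * cond_num sig * cond_num S) \<le> 1"
proof -
  define d where "d = real CARD('d)"
  have d: "d \<ge> 1" by (simp add: d_def Suc_leI)
  have "\<theta>1 \<le> (1/d) * (1 / (3 * (Jmax / d) * \<delta>st))"
    and "\<theta>1 \<le> (1/d) * (1 / (64 * L0 * cond_num sig * cond_num S))"
    and "\<theta>1 \<le> (1/d) * (1 / (4 * (Jmax / d)\<^sup>2))"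
    unfolding \<theta>1_def d_def[symmetric] using d by (intro mult_left_mono; simp)+
  then have m1: "\<theta> \<le> (1/d) * (1 / (3 * (Jmax / d) * \<delta>st))"
    and m2: "\<theta> \<le> (1/d) * (1 / (64 * L0 * cond_num sig * cond_num S))"
    and m3: "\<theta> \<le> (1/d) * (1 / (4 * (Jmax / d)\<^sup>2))"
    using \<theta>(2) by linarith+
  have \<delta>st_pos: "\<delta>st > 0" using \<delta>0_pos lam_max_S_pos by (simp add: \<delta>st_def)
  show "\<theta> * Jmax * \<delta>st \<le> 1/3"
  proof (cases "Jmax = 0")
    case False
    then have "Jmax > 0" using Jmax_nonneg by simp
    then show ?thesis using m1 d \<delta>st_pos by (simp add: field_simps)
  qed simp
  show "\<theta> * Jmax\<^sup>2 \<le> real CARD('d) / 4"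
  proof (cases "Jmax = 0")
    case False
    then have "Jmax > 0" using Jmax_nonneg by simp
    then show ?thesis using m3 d by (simp add: d_def[symmetric] field_simps power2_eq_square)
  qed (simp add: d_def)
  have K: "64 * L0 * cond_num sig * cond_num S > 0"
    using L0_ge_1 cond_num_pos[OF sig_posdef] cond_num_pos[OF S_posdef] by simp
  then have "(1/d) * (1 / (64 * L0 * cond_num sig * cond_num S)) \<le> 1 / (64 * L0 * cond_num sig * cond_num S)"
    using d by (simp add: field_simps)
  then have "\<theta> \<le> 1 / (64 * L0 * cond_num sig * cond_num S)" using m2 by linarith
  then show "\<theta> * (64 * L0 * cond_num sig * cond_num S) \<le> 1"
    using K by (simp add: le_divide_eq)
qed

lemma increment_abs_le: "J \<in> JJ \<Longrightarrow> \<bar>increment J\<bar> \<le> 2 * (norm Z * Jmax) + Jmax\<^sup>2"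
proof -
  assume J: "J \<in> JJ"
  have "\<bar>(R *v Z) \<bullet> J\<bar> \<le> norm Z * Jmax"
    using Cauchy_Schwarz_ineq2[of Z "R *v J"] norm_R_le_Jmax[OF J]
    by (simp add: R_inner_commute) (meson mult_left_mono norm_ge_zero order_trans)
  moreover have "(R *v J) \<bullet> (R *v J) \<le> Jmax\<^sup>2"
    using norm_R_le_Jmax[OF J] by (simp add: power2_norm_eq_inner[symmetric] power_mono)
  moreover have "0 \<le> (R *v J) \<bullet> (R *v J)" "0 \<le> Jmax\<^sup>2" by simp_all
  ultimately show ?thesis unfolding increment_def abs_le_iff by linarith
qed

lemma exp_increment_small:
  assumes "0 < \<theta>" "\<theta> \<le> \<theta>1" "J \<in> JJ"
  shows "\<bar>\<theta> * increment J / real n\<bar> \<le> 1"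
proof -
  have "\<bar>\<theta> * increment J / real n\<bar> \<le> \<theta> * (2 * (norm Z * Jmax) + Jmax\<^sup>2) / real n"
    using increment_abs_le[OF assms(3)] assms n_pos
    by (simp add: abs_mult divide_right_mono mult_left_mono)
  also have "\<dots> = 2 * (\<theta> * Jmax * (norm Z / real n)) + \<theta> * Jmax\<^sup>2 / real n"
    using n_pos by (simp add: field_simps)
  also have "\<dots> \<le> 2 * (1/3) + 1/4"
proof -
    have "norm Z \<le> real n * \<delta>st"
      using order_trans[OF norm_Z_le mult_left_mono[OF \<delta>_le of_nat_0_le_iff]] .
    then have "norm Z / real n \<le> \<delta>st" using n_pos by (simp add: divide_le_eq mult.commute)
    then have "\<theta> * Jmax * (norm Z / real n) \<le> \<theta> * Jmax * \<delta>st"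
      using assms Jmax_nonneg by (intro mult_left_mono) auto
    moreover have "\<theta> * Jmax\<^sup>2 / real n \<le> 1/4"
      using theta_bounds(2)[OF assms(1,2)] card_le_n n_pos by (simp add: divide_le_eq)
    ultimately show ?thesis using theta_bounds(1)[OF assms(1,2)] by linarith
  qed
  finally show ?thesis by linarith
qed

lemma linear_part_sq_bound: "(\<Sum>J\<in>JJ. g J xn * ((R *v Z) \<bullet> J)\<^sup>2) \<le> L0 * lam_max sS * (Z \<bullet> Z)"
proof -
  have "(\<Sum>J\<in>JJ. g J xn * ((R *v Z) \<bullet> J)\<^sup>2) \<le> (\<Sum>J\<in>JJ. L0 * (g J c * ((R *v J) \<bullet> Z)\<^sup>2))"
    using rate_le_L0 xn_in_cball
    by (intro sum_mono) (simp add: R_inner_commute inner_commute[of Z] mult_right_mono mult.assoc[symmetric])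
  also have "\<dots> = L0 * (Z \<bullet> (sS *v Z))" by (simp add: inner_sS sum_distrib_left)
  also have "\<dots> \<le> L0 * (lam_max sS * (Z \<bullet> Z))"
    using L0_ge_1 rayleigh_upper[OF sS_sym, of Z] by (intro mult_left_mono) auto
  finally show ?thesis by (simp add: mult.assoc)
qed

lemma jump_size_sq_bound: "(\<Sum>J\<in>JJ. g J xn * ((R *v J) \<bullet> (R *v J))\<^sup>2) \<le> Jmax\<^sup>2 * (L0 * trace sS)"
proof -
  have "(\<Sum>J\<in>JJ. g J xn * ((R *v J) \<bullet> (R *v J))\<^sup>2) \<le> (\<Sum>J\<in>JJ. Jmax\<^sup>2 * (g J xn * ((R *v J) \<bullet> (R *v J))))"
  proof (intro sum_mono)
    fix J assume J: "J \<in> JJ"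
    have "(R *v J) \<bullet> (R *v J) \<le> Jmax\<^sup>2"
      using norm_R_le_Jmax[OF J] by (simp add: power2_norm_eq_inner[symmetric] power_mono)
    then have "((R *v J) \<bullet> (R *v J))\<^sup>2 \<le> Jmax\<^sup>2 * ((R *v J) \<bullet> (R *v J))"
      by (simp add: power2_eq_square mult_right_mono)
    from mult_left_mono[OF this, of "g J xn"]
    show "g J xn * ((R *v J) \<bullet> (R *v J))\<^sup>2 \<le> Jmax\<^sup>2 * (g J xn * ((R *v J) \<bullet> (R *v J)))"
      using g_nonneg by (simp add: mult.left_commute)
  qed
  also have "\<dots> \<le> Jmax\<^sup>2 * (L0 * trace sS)"
    unfolding sum_distrib_left[symmetric] using jump_size_bound by (intro mult_left_mono) auto
  finally show ?thesis .
qed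

lemma second_moment_bound:
  assumes \<theta>: "0 < \<theta>" "\<theta> \<le> \<theta>1"
  shows "\<theta> * (\<Sum>J\<in>JJ. g J xn * (increment J)\<^sup>2) \<le> \<alpha>1 * (Z \<bullet> Z) / 2"
proof -
  have "(\<Sum>J\<in>JJ. g J xn * (increment J)\<^sup>2)
      \<le> (\<Sum>J\<in>JJ. 8 * (g J xn * ((R *v Z) \<bullet> J)\<^sup>2) + 2 * (g J xn * ((R *v J) \<bullet> (R *v J))\<^sup>2))"
  proof (intro sum_mono)
    fix J
    have "(increment J)\<^sup>2 \<le> 8 * ((R *v Z) \<bullet> J)\<^sup>2 + 2 * ((R *v J) \<bullet> (R *v J))\<^sup>2"
      unfolding increment_def
      using zero_le_power2[of "2 * ((R *v Z) \<bullet> J) - (R *v J) \<bullet> (R *v J)"]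
      by (simp add: power2_eq_square algebra_simps)
    from mult_left_mono[OF this, of "g J xn"]
    show "g J xn * (increment J)\<^sup>2
        \<le> 8 * (g J xn * ((R *v Z) \<bullet> J)\<^sup>2) + 2 * (g J xn * ((R *v J) \<bullet> (R *v J))\<^sup>2)"
      using g_nonneg by (simp add: distrib_left mult.left_commute)
  qed
  also have "\<dots> \<le> 8 * (L0 * lam_max sS * (Z \<bullet> Z)) + 2 * (Jmax\<^sup>2 * (L0 * trace sS))"
    using linear_part_sq_bound jump_size_sq_bound by (simp add: sum.distrib sum_distrib_left[symmetric])
  finally have "\<theta> * (\<Sum>J\<in>JJ. g J xn * (increment J)\<^sup>2)
      \<le> \<theta> * (8 * (L0 * lam_max sS * (Z \<bullet> Z)) + 2 * (Jmax\<^sup>2 * (L0 * trace sS)))"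
    using \<theta> by (intro mult_left_mono) auto
  also have "\<dots> = (8 * \<theta> * L0 * lam_max sS) * (Z \<bullet> Z) + 2 * (\<theta> * Jmax\<^sup>2) * (L0 * trace sS)"
    by (simp add: algebra_simps)
  also have "\<dots> \<le> (\<alpha>1 / 4) * (Z \<bullet> Z) + 2 * (real n / 4) * (L0 * trace sS)"
  proof (intro add_mono mult_right_mono mult_left_mono)
    have "8 * \<theta> * L0 * lam_max sS \<le> 8 * \<theta> * L0 * (cond_num sig * cond_num S * lam_min sS)"
      using lam_max_sS_le \<theta> L0_ge_1 by (intro mult_left_mono) auto
    also have "\<dots> = (\<theta> * (64 * L0 * cond_num sig * cond_num S)) * (lam_min sS / 8)" by simp
    also have "\<dots> \<le> lam_min sS / 8"
      using theta_bounds(3)[OF \<theta>] posdef_lam_min_pos[OF sS_posdef] \<theta>(1) L0_ge_1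
        cond_num_pos[OF sig_posdef] cond_num_pos[OF S_posdef]
      by (intro mult_left_le_one_le) auto
    finally show "8 * \<theta> * L0 * lam_max sS \<le> \<alpha>1 / 4" by (simp add: \<alpha>1_def)
    show "\<theta> * Jmax\<^sup>2 \<le> real n / 4" using theta_bounds(2)[OF \<theta>] card_le_n by linarith
  qed (use L0_ge_1 trace_sS_nonneg in auto)
  also have "\<dots> \<le> \<alpha>1 * (Z \<bullet> Z) / 2" using diffusion_bound by simp
  finally show ?thesis .
qed

lemma gen_exp_bound:
  assumes \<theta>: "0 < \<theta>" "\<theta> \<le> \<theta>1"
  shows "gen JJ g S n \<delta> c (\<lambda>Y. exp (\<theta> * h0 Y / real n)) X
    \<le> - (1/2) * inverse (real n) * \<alpha>1 * \<theta> * h0 X * exp (\<theta> * h0 X / real n)"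
proof -
  have "gen JJ g S n \<delta> c (\<lambda>Y. exp (\<theta> * h0 Y / real n)) X
      \<le> real n * (\<Sum>J\<in>JJ. g J xn * (exp (\<theta> * (h0 X + increment J) / real n) - exp (\<theta> * h0 X / real n)))"
    unfolding xn_def h0_step[symmetric] using \<theta>(1) n_pos
    by (intro gen_le_unrestricted[OF X_in JJ_lat g_nonneg])
      (simp add: h0_le_outside divide_right_mono mult_left_mono)
  also have "\<dots> \<le> - (1/2) * inverse (real n) * \<alpha>1 * \<theta> * h0 X * exp (\<theta> * h0 X / real n)"
    using JJ_fin g_nonneg n_pos \<theta>(1) exp_increment_small[OF \<theta>] h0_drift second_moment_bound[OF \<theta>]
    by (intro exp_test_function_drift) (auto simp: h0_X)
  finally show ?thesis .
qed

end

theorem lemma2p2: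
  fixes JJ :: "(real^'d) set"
    and g :: "real^'d \<Rightarrow> real^'d \<Rightarrow> real"
    and Dg :: "real^'d \<Rightarrow> real^'d \<Rightarrow> real^'d"
    and Hg :: "real^'d \<Rightarrow> real^'d \<Rightarrow> real^'d^'d"
    and c :: "real^'d" and \<delta>0 :: real
    and A S :: "real^'d^'d"
    and n :: nat and \<delta> :: real and X :: "real^'d"
    and L0 L2 \<alpha>1 Kst \<delta>st \<delta>st' \<theta>1 nst Jmax \<Lambda>bar :: real
    and sig sS R :: "real^'d^'d"
    and h0 :: "real^'d \<Rightarrow> real"
  assumes n_ge: "real n \<ge> real CARD('d) ^ 4"
    and JJ_fin: "finite JJ"
    and JJ_lat: "\<forall>J\<in>JJ. lattice_pt J"
    and g_nonneg: "\<forall>J x. g J x \<ge> 0"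
    and \<delta>0_pos: "\<delta>0 > 0"
    and G0: "drift JJ g c = 0"
    (* A = DF(c) *)
    and A_deriv: "(drift JJ g has_derivative (\<lambda>h. A *v h)) (at c)"
    and G1: "hurwitz A"
    (* (G2): g^J is C^2 on the closed ball, with gradient Dg J and Hessian Hg J *)
    and G2_1: "\<forall>J\<in>JJ. \<forall>x\<in>cball c \<delta>0.
                 (g J has_derivative (\<lambda>h. Dg J x \<bullet> h)) (at x within cball c \<delta>0)"
    and G2_2: "\<forall>J\<in>JJ. \<forall>x\<in>cball c \<delta>0.
                 (Dg J has_derivative (\<lambda>h. Hg J x *v h)) (at x within cball c \<delta>0)"
    and G2_3: "\<forall>J\<in>JJ. continuous_on (cball c \<delta>0) (Hg J)"
    and G3: "\<exists>\<epsilon>0>0. \<forall>J\<in>JJ. g J c > 0 \<and> (\<forall>x\<in>cball c \<delta>0. g J x \<ge> \<epsilon>0 * g J c)"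
    and G4: "\<forall>j. \<exists>k :: real^'d \<Rightarrow> nat. axis j 1 = (\<Sum>J\<in>JJ. real (k J) *\<^sub>R J)"
    and sig_def: "sig = sigma2 JJ g c"
    and S_posdef: "posdef S"
    and S_lyap: "A ** S + S ** transpose A + sig = 0"
    and R_def: "R = psd_sqrt (matrix_inv S)"
    and sS_def: "sS = R ** sig ** R"
    and L0_def: "L0 = Max ((\<lambda>J. Sup ((\<lambda>x. g J x / g J c) ` cball c \<delta>0)) ` JJ)"
    and L2_def: "L2 = Max ((\<lambda>J. Sup ((\<lambda>x. onorm (\<lambda>h. Hg J x *v h) / g J c) ` cball c \<delta>0)) ` JJ)"
    and \<Lambda>bar_def: "\<Lambda>bar = trace sig / real CARD('d)"
    and Jmax_def: "Jmax = Max ((\<lambda>J. norm (R *v J)) ` JJ)"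
    and \<alpha>1_def: "\<alpha>1 = lam_min sS / 2"
    and Kst_def: "Kst = sqrt (2 * L0 * trace sS / (real CARD('d) * \<alpha>1))"
    and \<delta>st_def: "\<delta>st = \<delta>0 / sqrt (lam_max S)"
    and \<delta>st'_def: "\<delta>st' = \<alpha>1 * sqrt (lam_min S)
                     / (4 * real CARD('d) * \<Lambda>bar * L2 * lam_max S)"
    and \<theta>1_def: "\<theta>1 = (1 / real CARD('d)) *
        min (1 / (3 * (Jmax / real CARD('d)) * \<delta>st))
          (min (1 / (64 * L0 * cond_num sig * cond_num S))
               (1 / (4 * (Jmax / real CARD('d))^2)))"
    and nst_def: "nst = (Jmax / real CARD('d) / \<delta>st) powr (4/3)"
    and h0_def: "h0 = (\<lambda>Y. (snorm S (Y - real n *\<^sub>R c))^2)"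
    (* delta \<le> min{delta_*, delta'_*(d)}, delta'_* = +infinity if L2 = 0 *)
    and \<delta>_le: "\<delta> \<le> \<delta>st" and \<delta>_le': "L2 \<noteq> 0 \<longrightarrow> \<delta> \<le> \<delta>st'"
    and X_in: "X \<in> tball S n \<delta> c"
    and X_far: "snorm S (X - real n *\<^sub>R c) \<ge> Kst * sqrt (real n * real CARD('d))"
  shows "gen JJ g S n \<delta> c h0 X \<le> - \<alpha>1 * h0 X \<and>
         (real n \<ge> nst \<longrightarrow> (\<forall>\<theta>. 0 < \<theta> \<and> \<theta> \<le> \<theta>1 \<longrightarrow>
           gen JJ g S n \<delta> c (\<lambda>Y. exp (\<theta> * h0 Y / real n)) X
             \<le> - (1/2) * inverse (real n) * \<alpha>1 * \<theta> * h0 X * exp (\<theta> * h0 X / real n)))"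
proof -
  interpret jump_model_point JJ g Dg Hg c \<delta>0 A S sig R sS L0 L2 Jmax \<alpha>1
      n \<delta> X Kst \<delta>st \<delta>st' \<theta>1 \<Lambda>bar h0
    by unfold_locales (fact assms)+
  show ?thesis using gen_h0_bound gen_exp_bound by blast
qed

end
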